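(* Let $\{\rho^{(i)}\}_{i\ge0}\subset\mathcal R^*$ be the sequence generated by the alternating optimization algorithm, $\rho^{(i+1)}=\mathcal A(\rho^{(i)})$, from an initial $\rho^{(0)}$ with $\rho^{(0)}_k=\mathcal N(0,\Sigma_{\rho^{(0)}_k})$, $\Sigma_{\rho^{(0)}_k}\succ0$. Then the set $\mathcal E$ of all cluster points of $\{\rho^{(i)}\}$ satisfies $\mathcal E\subset\{\rho\in\mathcal R^*\mid\rho=\mathcal A(\rho)\}$.
   Context: Fix integers $n,m,T\ge 1$, $\varepsilon>0$, matrices $A_k\in\mathbb R^{n\times n}$, $B_k\in\mathbb R^{n\times m}$, and symmetric positive definite $R_k\in\mathbb R^{m\times m}$, $\Sigma_{w_k}\in\mathbb R^{n\times n}$ ($k=0,\dots,T-1$), $F,\Sigma_{x_{\mathrm{ini}}}\in\mathbb R^{n\times n}$. $\mathcal N(\mu,\Sigma)$ is the (possibly degenerate) Gaussian with $\Sigma\succeq0$. Cost for a policy $\pi=\{\pi_k\}$ (conditional distributions of $u_k$ given $x_k$) and prior $\rho=\{\rho_k\}$: $J(\pi,\rho)=\mathbb E\big[\sum_{k=0}^{T-1}\{\tfrac12 u_k^\top R_k u_k+\varepsilon D_{KL}(\pi_k(\cdot|x_k)\|\rho_k)\}+\tfrac12 x_T^\top F x_T\big]$ with $x_{k+1}=A_kx_k+B_ku_k+w_k$, $u_k\sim\pi_k(\cdot|x_k)$, $w_k\sim\mathcal N(0,\Sigma_{w_k})$ independent, $x_0\sim\mathcal N(0,\Sigma_{x_{\mathrm{ini}}})$.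 Let $\mathcal R^*=\{\rho:\rho_k=\mathcal N(0,\Sigma_{\rho_k}),\ \Sigma_{\rho_k}\succeq0\}$, identified with $(\mathbb S^m_{\succeq0})^T$ via the covariances. For $\rho\in\mathcal R^*$, $\pi^\rho$ denotes the (unique) minimizer of $J(\cdot,\rho)$ over policies and $\mathcal A(\rho)=\arg\min_{\rho^+\in\mathcal R^*}J(\pi^\rho,\rho^+)$. Explicitly: with $\Pi_T=F$, $C_k=(R_k+B_k^\top\Pi_{k+1}B_k)/\varepsilon$, $\Pi_k=A_k^\top\Pi_{k+1}A_k-\frac1\varepsilon A_k^\top\Pi_{k+1}B_k\Sigma_{\rho_k}^{1/2}(I+\Sigma_{\rho_k}^{1/2}C_k\Sigma_{\rho_k}^{1/2})^{-1}\Sigma_{\rho_k}^{1/2}B_k^\top\Pi_{k+1}A_k$, $\Sigma_{\pi_k}=\Sigma_{\rho_k}^{1/2}(I+\Sigma_{\rho_k}^{1/2}C_k\Sigma_{\rho_k}^{1/2})^{-1}\Sigma_{\rho_k}^{1/2}$, $P_k=-\frac1\varepsilon\Sigma_{\pi_k}B_k^\top\Pi_{k+1}A_k$, one has $\pi^\rho_k(\cdot|x)=\mathcal N(P_kx,\Sigma_{\pi_k})$; and with $\Sigma_{x_0}=\Sigma_{x_{\mathrm{ini}}}$, $\Sigma_{x_{k+1}}=(A_k+B_kP_k)\Sigma_{x_k}(A_k+B_kP_k)^\top+B_k\Sigma_{\pi_k}B_k^\top+\Sigma_{w_k}$, one has $\mathcal A(\rho)_k=\mathcal N(0,\Sigma_{\pi_k}+P_k\Sigma_{x_k}P_k^\top)$.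 *)

theory Defs
  imports "HOL-Analysis.Analysis"
begin

text \<open>Matrices: a p-by-q real matrix is \<open>real^'q^'p\<close> (rows indexed by 'p).
  Dimensions n (state) and m (input) are the type variables 'n and 'm.\<close>

definition psd_mat :: "real^'a^'a \<Rightarrow> bool" where
  "psd_mat M \<longleftrightarrow> transpose M = M \<and> (\<forall>x. 0 \<le> x \<bullet> (M *v x))"

definition pd_mat :: "real^'a^'a \<Rightarrow> bool" where
  "pd_mat M \<longleftrightarrow> transpose M = M \<and> (\<forall>x. x \<noteq> 0 \<longrightarrow> 0 < x \<bullet> (M *v x))"

definition msqrt :: "real^'a^'a \<Rightarrow> real^'a^'a" where
  "msqrt M = (THE S. psd_mat S \<and> S ** S = M)"

definition Cmat :: "real \<Rightarrow> real^'m^'m \<Rightarrow> real^'m^'n \<Rightarrow> real^'n^'n \<Rightarrow> real^'m^'m" where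
  "Cmat eps Rk Bk Pi1 = (1 / eps) *\<^sub>R (Rk + transpose Bk ** Pi1 ** Bk)"

definition Spi_of :: "real^'m^'m \<Rightarrow> real^'m^'m \<Rightarrow> real^'m^'m" where
  "Spi_of Srho C = msqrt Srho ** matrix_inv (mat 1 + msqrt Srho ** C ** msqrt Srho) ** msqrt Srho"

text \<open>Backward Riccati-type recursion: \<open>PiRev ... j = \<Pi>\<^sub>T\<^sub>-\<^sub>j\<close>.\<close>
primrec PiRev :: "real \<Rightarrow> nat \<Rightarrow> (nat \<Rightarrow> real^'n^'n) \<Rightarrow> (nat \<Rightarrow> real^'m^'n) \<Rightarrow>
    (nat \<Rightarrow> real^'m^'m) \<Rightarrow> real^'n^'n \<Rightarrow> (nat \<Rightarrow> real^'m^'m) \<Rightarrow> nat \<Rightarrow> real^'n^'n" where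
  "PiRev eps T A B R F Srho 0 = F"
| "PiRev eps T A B R F Srho (Suc j) =
     (let k = T - Suc j; P1 = PiRev eps T A B R F Srho j in
      transpose (A k) ** P1 ** A k
      - (1 / eps) *\<^sub>R (transpose (A k) ** P1 ** B k
            ** Spi_of (Srho k) (Cmat eps (R k) (B k) P1) ** transpose (B k) ** P1 ** A k))"

definition PiM :: "real \<Rightarrow> nat \<Rightarrow> (nat \<Rightarrow> real^'n^'n) \<Rightarrow> (nat \<Rightarrow> real^'m^'n) \<Rightarrow>
    (nat \<Rightarrow> real^'m^'m) \<Rightarrow> real^'n^'n \<Rightarrow> (nat \<Rightarrow> real^'m^'m) \<Rightarrow> nat \<Rightarrow> real^'n^'n" where
  "PiM eps T A B R F Srho k = PiRev eps T A B R F Srho (T - k)"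

text \<open>Policy covariance \<open>\<Sigma>\<^sub>\<pi>\<^sub>k\<close> and gain \<open>P\<^sub>k\<close> of \<open>\<pi>\<^sup>\<rho>\<close>.\<close>
definition SpiM :: "real \<Rightarrow> nat \<Rightarrow> (nat \<Rightarrow> real^'n^'n) \<Rightarrow> (nat \<Rightarrow> real^'m^'n) \<Rightarrow>
    (nat \<Rightarrow> real^'m^'m) \<Rightarrow> real^'n^'n \<Rightarrow> (nat \<Rightarrow> real^'m^'m) \<Rightarrow> nat \<Rightarrow> real^'m^'m" where
  "SpiM eps T A B R F Srho k =
     Spi_of (Srho k) (Cmat eps (R k) (B k) (PiM eps T A B R F Srho (Suc k)))"

definition PgainM :: "real \<Rightarrow> nat \<Rightarrow> (nat \<Rightarrow> real^'n^'n) \<Rightarrow> (nat \<Rightarrow> real^'m^'n) \<Rightarrow>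
    (nat \<Rightarrow> real^'m^'m) \<Rightarrow> real^'n^'n \<Rightarrow> (nat \<Rightarrow> real^'m^'m) \<Rightarrow> nat \<Rightarrow> real^'n^'m" where
  "PgainM eps T A B R F Srho k =
     - ((1 / eps) *\<^sub>R (SpiM eps T A B R F Srho k ** transpose (B k)
           ** PiM eps T A B R F Srho (Suc k) ** A k))"

text \<open>State covariances under \<open>\<pi>\<^sup>\<rho>\<close>.\<close>
primrec SxM :: "real \<Rightarrow> nat \<Rightarrow> (nat \<Rightarrow> real^'n^'n) \<Rightarrow> (nat \<Rightarrow> real^'m^'n) \<Rightarrow>
    (nat \<Rightarrow> real^'m^'m) \<Rightarrow> (nat \<Rightarrow> real^'n^'n) \<Rightarrow> real^'n^'n \<Rightarrow> real^'n^'n \<Rightarrow>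
    (nat \<Rightarrow> real^'m^'m) \<Rightarrow> nat \<Rightarrow> real^'n^'n" where
  "SxM eps T A B R Sw F Sxini Srho 0 = Sxini"
| "SxM eps T A B R Sw F Sxini Srho (Suc k) =
     (let Acl = A k + B k ** PgainM eps T A B R F Srho k in
      Acl ** SxM eps T A B R Sw F Sxini Srho k ** transpose Acl
      + B k ** SpiM eps T A B R F Srho k ** transpose (B k) + Sw k)"

text \<open>The update map \<open>\<A>\<close> on covariance tuples \<open>(\<Sigma>\<^sub>\<rho>\<^sub>k)\<^sub>k\<^sub><\<^sub>T\<close>
  (entries with \<open>k \<ge> T\<close> are irrelevant and set to 0).\<close>
definition Aop :: "real \<Rightarrow> nat \<Rightarrow> (nat \<Rightarrow> real^'n^'n) \<Rightarrow> (nat \<Rightarrow> real^'m^'n) \<Rightarrow>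
    (nat \<Rightarrow> real^'m^'m) \<Rightarrow> (nat \<Rightarrow> real^'n^'n) \<Rightarrow> real^'n^'n \<Rightarrow> real^'n^'n \<Rightarrow>
    (nat \<Rightarrow> real^'m^'m) \<Rightarrow> nat \<Rightarrow> real^'m^'m" where
  "Aop eps T A B R Sw F Sxini Srho k =
     (if k < T then
        SpiM eps T A B R F Srho k
        + PgainM eps T A B R F Srho k ** SxM eps T A B R Sw F Sxini Srho k
            ** transpose (PgainM eps T A B R F Srho k)
      else 0)"

definition cluster_point :: "nat \<Rightarrow> (nat \<Rightarrow> nat \<Rightarrow> real^'m^'m) \<Rightarrow> (nat \<Rightarrow> real^'m^'m) \<Rightarrow> bool" where
  "cluster_point T seq rho \<longleftrightarrow>
     (\<exists>r. strict_mono r \<and> (\<forall>k<T. (\<lambda>j. seq (r j) k) \<longlonglongrightarrow> rho k))"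

end

theory Submission
  imports Defs
begin

text \<open>Write \<open>J(\<rho>)\<close> for the cost of the optimal policy \<open>\<pi>\<^sup>\<rho>\<close> under the prior \<open>\<rho>\<close>.
  Completing the square along the Riccati recursion shows that a linear Gaussian policy
  \<open>u\<^sub>k \<sim> N(P\<^sub>k x\<^sub>k, \<Sigma>\<^sub>k)\<close> costs \<open>J(\<rho>)\<close> plus \<open>\<epsilon>/2\<close> times the Gaussian divergences
  of \<open>\<Sigma>\<^sub>k\<close> from \<open>\<Sigma>\<^sub>\<pi>\<^sub>k\<close> plus a nonnegative quadratic penalty in \<open>P\<^sub>k - P\<^sup>*\<^sub>k\<close>;
  and replacing the prior by the marginal action covariances \<open>\<A>(\<rho>)\<close> of \<open>\<pi>\<^sup>\<rho>\<close> lowers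
  its cost by \<open>\<epsilon>/2 \<Sum>\<^sub>k D(\<A>(\<rho>)\<^sub>k \<parallel> \<rho>\<^sub>k)\<close>.  Hence \<open>J(\<rho>\<^sup>(\<^sup>i\<^sup>))\<close> is
  nonincreasing and nonnegative, so the divergences between consecutive iterates tend to \<open>0\<close>.
  A vanishing divergence forces the quadratic forms of consecutive iterates together, and since
  \<open>\<A>\<close> is continuous (also at singular limits, via \<open>\<Sigma>\<^sub>\<pi> = \<Sigma>\<^sub>\<rho> (I + C \<Sigma>\<^sub>\<rho>)\<^sup>-\<^sup>1\<close>),
  every cluster point is a fixed point of \<open>\<A>\<close>.\<close>

section \<open>Matrix algebra\<close>

lemma transpose_add: "transpose (A + B) = transpose A + transpose (B::'a::semiring_1^'n^'m)"
  by (simp add: transpose_def vec_eq_iff)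

lemma transpose_diff: "transpose (A - B) = transpose A - transpose (B::'a::ring_1^'n^'m)"
  by (simp add: transpose_def vec_eq_iff)

lemma transpose_uminus: "transpose (- A) = - transpose (A::'a::ring_1^'n^'m)"
  by (simp add: transpose_def vec_eq_iff)

lemma matrix_add_rdistrib: "(A + B) ** C = A ** C + B ** (C::'a::semiring_1^'p^'n)"
  by (vector matrix_matrix_mult_def sum.distrib[symmetric] field_simps)

lemma matrix_diff_ldistrib: "A ** (B - C) = A ** B - A ** (C::'a::ring_1^'p^'n)"
  by (vector matrix_matrix_mult_def sum_subtractf[symmetric] field_simps)

lemma matrix_diff_rdistrib: "(A - B) ** C = A ** C - B ** (C::'a::ring_1^'p^'n)"
  by (vector matrix_matrix_mult_def sum_subtractf[symmetric] field_simps)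

lemma matrix_uminus_left: "(- A) ** C = - (A ** (C::'a::ring_1^'p^'n))"
  by (vector matrix_matrix_mult_def sum_negf[symmetric])

lemma matrix_uminus_right: "A ** (- C) = - (A ** (C::'a::ring_1^'p^'n))"
  by (vector matrix_matrix_mult_def sum_negf[symmetric])

lemma matrix_scaleR_left: "(c *\<^sub>R A) ** C = c *\<^sub>R (A ** (C::real^'p^'n))"
  by (simp add: scalar_matrix_assoc)

lemma matrix_scaleR_right: "A ** (c *\<^sub>R C) = c *\<^sub>R (A ** (C::real^'p^'n))"
  by (simp add: matrix_scalar_ac scalar_matrix_assoc)

lemmas matrix_ring_simps = matrix_add_ldistrib matrix_add_rdistrib matrix_diff_ldistrib
  matrix_diff_rdistrib matrix_uminus_left matrix_uminus_right matrix_scaleR_left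
  matrix_scaleR_right transpose_add transpose_diff transpose_uminus transpose_scalar
  matrix_transpose_mul

lemma inner_matrix_transpose: "(x::real^'m) \<bullet> (A *v y) = (transpose A *v x) \<bullet> y"
  by (simp add: dot_lmul_matrix)

lemma inner_matrix_sym: "transpose A = A \<Longrightarrow> (x::real^'n) \<bullet> (A *v y) = y \<bullet> (A *v x)"
  by (metis inner_matrix_transpose inner_commute)

lemma inner_congruence:
  "(x::real^'k) \<bullet> ((transpose X ** M ** X) *v x) = (X *v x) \<bullet> (M *v (X *v x))"
proof -
  have "(transpose X ** M ** X) *v x = transpose X *v (M *v (X *v x))"
    by (simp add: matrix_vector_mul_assoc matrix_mul_assoc)
  then show ?thesis by (metis inner_matrix_transpose transpose_transpose inner_commute)
qed

lemma symmetric_eq_0_if_quadratic_form_0: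
  fixes M :: "real^'n^'n"
  assumes sym: "transpose M = M" and q: "\<And>v. v \<bullet> (M *v v) = 0"
  shows "M = 0"
proof -
  have uw: "u \<bullet> (M *v w) = 0" for u w
  proof -
    have "(u + w) \<bullet> (M *v (u + w)) = u \<bullet> (M *v u) + u \<bullet> (M *v w) + w \<bullet> (M *v u) + w \<bullet> (M *v w)"
      by (simp add: matrix_vector_right_distrib inner_add_left inner_add_right)
    moreover have "w \<bullet> (M *v u) = u \<bullet> (M *v w)" using inner_matrix_sym[OF sym] by blast
    ultimately show ?thesis using q[of "u + w"] q[of u] q[of w] by simp
  qed
  have "M *v w = 0" for w using uw[of "M *v w" w] by simp
  then show ?thesis by (simp add: matrix_eq)
qed

lemma matrix_vector_mult_axis: "(A *v axis j 1) $ i = (A::real^'n^'m) $ i $ j"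
  by (simp add: matrix_vector_mult_def axis_def if_distrib if_distribR sum.delta cong: if_cong)

lemma trace_scaleR: "trace (c *\<^sub>R A) = c * trace (A::real^'n^'n)"
  by (simp add: trace_def sum_distrib_left)

lemma trace_mult_cycle: "trace (A ** B ** C) = trace (C ** A ** (B::real^'n^'m))"
  using trace_mul_sym[of "A ** B" C] by (simp add: matrix_mul_assoc)


lemma psd_matD: "psd_mat M \<Longrightarrow> 0 \<le> x \<bullet> (M *v x)"
  by (simp add: psd_mat_def)

lemma psd_mat_sym: "psd_mat M \<Longrightarrow> transpose M = M"
  by (simp add: psd_mat_def)

lemma pd_matD: "pd_mat M \<Longrightarrow> x \<noteq> 0 \<Longrightarrow> 0 < x \<bullet> (M *v x)"
  by (simp add: pd_mat_def)

lemma pd_mat_sym: "pd_mat M \<Longrightarrow> transpose M = M"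
  by (simp add: pd_mat_def)

lemma pd_imp_psd_mat: "pd_mat M \<Longrightarrow> psd_mat M"
  unfolding pd_mat_def psd_mat_def
  by (metis inner_zero_left less_le matrix_vector_mult_0_right order_refl)

lemma psd_mat_add: "psd_mat A \<Longrightarrow> psd_mat B \<Longrightarrow> psd_mat (A + B)"
  by (simp add: psd_mat_def transpose_add matrix_vector_mult_add_rdistrib inner_add_right)

lemma pd_mat_add_psd: "pd_mat A \<Longrightarrow> psd_mat B \<Longrightarrow> pd_mat (A + B)"
  unfolding pd_mat_def psd_mat_def
  by (simp add: transpose_add matrix_vector_mult_add_rdistrib inner_add_right add_pos_nonneg)

lemma psd_mat_scaleR: "psd_mat A \<Longrightarrow> 0 \<le> c \<Longrightarrow> psd_mat (c *\<^sub>R A)"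
  by (simp add: psd_mat_def transpose_scalar scaleR_matrix_vector_assoc[symmetric])

lemma pd_mat_one: "pd_mat (mat 1)"
  by (simp add: pd_mat_def)

lemma psd_mat_congruence: "psd_mat M \<Longrightarrow> psd_mat (transpose X ** M ** (X::real^'k^'n))"
  unfolding psd_mat_def inner_congruence
  by (simp add: matrix_transpose_mul matrix_mul_assoc)

lemma psd_mat_congruence': "psd_mat M \<Longrightarrow> psd_mat (X ** M ** transpose (X::real^'n^'k))"
  using psd_mat_congruence[of M "transpose X"] by simp

lemma pd_mat_congruence:
  assumes "pd_mat M" and "\<And>v. X *v v = 0 \<Longrightarrow> v = 0"
  shows "pd_mat (transpose X ** M ** (X::real^'k^'n))"
  using assms unfolding pd_mat_def inner_congruence
  by (simp add: matrix_transpose_mul matrix_mul_assoc) blast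

lemma trace_psd_nonneg: "psd_mat (A::real^'n^'n) \<Longrightarrow> 0 \<le> trace A"
proof -
  assume "psd_mat A"
  then have "0 \<le> A $ i $ i" for i
    using psd_matD[of A "axis i 1"] by (simp add: inner_axis' matrix_vector_mult_axis)
  then show ?thesis by (simp add: trace_def sum_nonneg)
qed


lemma matrix_inv_right: "invertible A \<Longrightarrow> A ** matrix_inv A = mat 1"
  and matrix_inv_left: "invertible A \<Longrightarrow> matrix_inv A ** A = mat 1"
proof -
  assume "invertible A"
  then have "\<exists>A'. A ** A' = mat 1 \<and> A' ** A = mat 1" by (simp add: invertible_def)
  then have "A ** matrix_inv A = mat 1 \<and> matrix_inv A ** A = mat 1"
    unfolding matrix_inv_def by (rule someI_ex)
  then show "A ** matrix_inv A = mat 1" "matrix_inv A ** A = mat 1" by auto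
qed

lemma matrix_inv_unique_left:
  fixes A :: "real^'n^'n"
  assumes "B ** A = mat 1"
  shows "matrix_inv A = B"
proof -
  have "invertible A" using assms invertible_left_inverse by blast
  then have "B ** A ** matrix_inv A = B" by (simp add: matrix_inv_right flip: matrix_mul_assoc)
  then show ?thesis using assms by simp
qed

lemma invertible_if_inj:
  fixes A :: "real^'n^'n"
  assumes "\<And>v. A *v v = 0 \<Longrightarrow> v = 0"
  shows "invertible A"
proof -
  have "inj ((*v) A)"
  proof (rule injI)
    fix x y assume "A *v x = A *v y"
    then have "A *v (x - y) = 0" by (simp add: matrix_vector_mult_diff_distrib)
    then show "x = y" using assms[of "x - y"] by simp
  qed
  then show ?thesis
    using det_nz_iff_inj[of "(*v) A"] by (simp add: invertible_det_nz)
qed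

lemma invertible_mult_vec_eq_0: "invertible (A::real^'n^'n) \<Longrightarrow> A *v v = 0 \<Longrightarrow> v = 0"
  by (metis matrix_inv_left matrix_vector_mul_assoc matrix_vector_mul_lid matrix_vector_mult_0_right)

lemma pd_mat_invertible: "pd_mat (A::real^'n^'n) \<Longrightarrow> invertible A"
  by (metis inner_zero_right invertible_if_inj less_irrefl pd_matD)

lemma matrix_inv_transpose:
  "invertible (A::real^'n^'n) \<Longrightarrow> matrix_inv (transpose A) = transpose (matrix_inv A)"
  by (metis matrix_inv_unique_left matrix_inv_right matrix_transpose_mul transpose_mat)

lemma invertible_matrix_inv: "invertible (A::real^'n^'n) \<Longrightarrow> invertible (matrix_inv A)"
  unfolding invertible_def[of "matrix_inv A"] using matrix_inv_left matrix_inv_right by blast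

lemma matrix_inv_matrix_inv: "invertible (A::real^'n^'n) \<Longrightarrow> matrix_inv (matrix_inv A) = A"
  by (simp add: matrix_inv_unique_left matrix_inv_right)

lemma matrix_inv_mult:
  "invertible (A::real^'n^'n) \<Longrightarrow> invertible (B::real^'n^'n) \<Longrightarrow>
    matrix_inv (A ** B) = matrix_inv B ** matrix_inv A"
  by (rule matrix_inv_unique_left) (metis matrix_inv_left matrix_mul_assoc matrix_mul_lid)

lemma det_matrix_inv:
  assumes "invertible (A::real^'n^'n)"
  shows "det (matrix_inv A) = 1 / det A"
proof -
  have "det (matrix_inv A) * det A = 1" by (metis assms det_I det_mul matrix_inv_left)
  moreover have "det A \<noteq> 0" using assms invertible_det_nz by blast
  ultimately show ?thesis by (simp add: field_simps)
qed

lemma pd_mat_matrix_inv: "pd_mat (A::real^'n^'n) \<Longrightarrow> pd_mat (matrix_inv A)"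
proof -
  assume A: "pd_mat A"
  then have inv: "invertible A" by (rule pd_mat_invertible)
  have sym: "transpose (matrix_inv A) = matrix_inv A"
    by (metis A inv matrix_inv_transpose pd_mat_sym)
  have "transpose (matrix_inv A) ** A ** matrix_inv A = matrix_inv A"
    by (simp add: sym inv matrix_inv_right matrix_mul_assoc[symmetric])
  moreover have "pd_mat (transpose (matrix_inv A) ** A ** matrix_inv A)"
    by (rule pd_mat_congruence[OF A]) (metis inv invertible_mult_vec_eq_0 invertible_matrix_inv)
  ultimately show ?thesis by simp
qed


section \<open>Limits of matrix operations\<close>

lemma tendsto_matrix_mult:
  fixes f :: "'x \<Rightarrow> real^'n^'m" and g :: "'x \<Rightarrow> real^'p^'n"
  assumes "(f \<longlongrightarrow> A) F" "(g \<longlongrightarrow> B) F"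
  shows "((\<lambda>x. f x ** g x) \<longlongrightarrow> A ** B) F"
  unfolding matrix_matrix_mult_def
  by (intro tendsto_vec_lambda tendsto_sum tendsto_mult tendsto_vec_nth assms)

lemma tendsto_matrix_vector_mult:
  fixes f :: "'x \<Rightarrow> real^'n^'m"
  assumes "(f \<longlongrightarrow> A) F"
  shows "((\<lambda>x. f x *v v) \<longlongrightarrow> A *v v) F"
  unfolding matrix_vector_mult_def
  by (intro tendsto_vec_lambda tendsto_sum tendsto_mult tendsto_vec_nth tendsto_const assms)

lemma tendsto_transpose:
  fixes f :: "'x \<Rightarrow> real^'n^'m"
  assumes "(f \<longlongrightarrow> A) F"
  shows "((\<lambda>x. transpose (f x)) \<longlongrightarrow> transpose A) F"
  unfolding transpose_def by (intro tendsto_vec_lambda tendsto_vec_nth assms)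

lemma tendsto_det:
  fixes f :: "'x \<Rightarrow> real^'n^'n"
  assumes "(f \<longlongrightarrow> A) F"
  shows "((\<lambda>x. det (f x)) \<longlongrightarrow> det A) F"
  unfolding det_def by (intro tendsto_sum tendsto_mult tendsto_const tendsto_prod tendsto_vec_nth assms)

lemma matrix_inv_cramer:
  fixes A :: "real^'n^'n"
  assumes "invertible A"
  shows "matrix_inv A = (\<chi> i j. det (\<chi> r c. if c = i then axis j 1 $ r else A $ r $ c) / det A)"
proof -
  have "det A \<noteq> 0" using assms invertible_det_nz by blast
  moreover have "A *v (matrix_inv A *v axis j 1) = axis j 1" for j
    by (simp add: matrix_vector_mul_assoc matrix_inv_right assms)
  ultimately have "matrix_inv A *v axis j 1
      = (\<chi> k. det (\<chi> r c. if c = k then axis j 1 $ r else A $ r $ c) / det A)" for j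
    using cramer by blast
  then show ?thesis by (simp add: vec_eq_iff matrix_vector_mult_axis[symmetric])
qed

lemma tendsto_matrix_inv:
  fixes f :: "'x \<Rightarrow> real^'n^'n"
  assumes lim: "(f \<longlongrightarrow> A) F" and inv: "invertible A"
  shows "((\<lambda>x. matrix_inv (f x)) \<longlongrightarrow> matrix_inv A) F"
proof -
  define C :: "real^'n^'n \<Rightarrow> real^'n^'n"
    where "C M = (\<chi> i j. det (\<chi> r c. if c = i then axis j 1 $ r else M $ r $ c) / det M)" for M
  have det: "det A \<noteq> 0" using inv invertible_det_nz by blast
  have "((\<lambda>x. C (f x)) \<longlongrightarrow> C A) F"
    unfolding C_def using lim det
    by (intro tendsto_vec_lambda tendsto_divide tendsto_det) (auto intro!: tendsto_vec_nth)
  moreover have "\<forall>\<^sub>F x in F. det (f x) \<noteq> 0"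
    using tendsto_det[OF lim] det by (simp add: tendsto_imp_eventually_ne)
  then have "\<forall>\<^sub>F x in F. C (f x) = matrix_inv (f x)"
    by eventually_elim (simp add: C_def matrix_inv_cramer invertible_det_nz)
  ultimately have "((\<lambda>x. matrix_inv (f x)) \<longlongrightarrow> C A) F" by (rule Lim_transform_eventually)
  then show ?thesis by (simp add: C_def matrix_inv_cramer inv)
qed

lemma psd_mat_limit:
  fixes f :: "nat \<Rightarrow> real^'n^'n"
  assumes lim: "f \<longlonglongrightarrow> A" and psd: "\<And>j. psd_mat (f j)"
  shows "psd_mat A"
proof -
  have "(\<lambda>j. transpose (f j)) \<longlonglongrightarrow> transpose A" by (rule tendsto_transpose[OF lim])
  moreover have "(\<lambda>j. transpose (f j)) = f" using psd psd_mat_sym by auto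
  ultimately have "transpose A = A" using lim LIMSEQ_unique by metis
  moreover have "(\<lambda>j. x \<bullet> (f j *v x)) \<longlonglongrightarrow> x \<bullet> (A *v x)" for x
    by (intro tendsto_inner tendsto_const tendsto_matrix_vector_mult lim)
  then have "0 \<le> x \<bullet> (A *v x)" for x
    by (meson LIMSEQ_le_const psd psd_matD)
  ultimately show ?thesis by (simp add: psd_mat_def)
qed


section \<open>Spectral theorem and square roots\<close>

definition diag_mat :: "real^'n \<Rightarrow> real^'n^'n" where
  "diag_mat d = (\<chi> i j. if i = j then d $ i else 0)"

lemma transpose_diag_mat [simp]: "transpose (diag_mat d) = diag_mat d"
  by (simp add: diag_mat_def transpose_def vec_eq_iff)

lemma diag_mat_mult: "diag_mat a ** diag_mat b = diag_mat (a * b)"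
proof -
  have "(diag_mat a ** diag_mat b) $ i $ j = (\<Sum>k\<in>UNIV. if k = i then a $ i * (if k = j then b $ k else 0) else 0)"
    for i j unfolding diag_mat_def matrix_matrix_mult_def vec_lambda_beta by (rule sum.cong) auto
  then show ?thesis by (simp add: vec_eq_iff diag_mat_def)
qed

lemma diag_mat_vector_mult: "diag_mat d *v y = (\<chi> i. d $ i * y $ i)"
  by (simp add: diag_mat_def matrix_vector_mult_def vec_eq_iff if_distrib if_distribR sum.delta
      cong: if_cong)

lemma det_diag_mat: "det (diag_mat d) = (\<Prod>i\<in>UNIV. d $ i)"
  by (subst det_diagonal) (auto simp: diag_mat_def)

lemma trace_diag_mat: "trace (diag_mat d) = (\<Sum>i\<in>UNIV. d $ i)"
  by (simp add: trace_def diag_mat_def)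

lemma quadratic_form_expand:
  fixes A :: "real^'n^'n"
  assumes "transpose A = A"
  shows "(b + t *\<^sub>R w) \<bullet> (A *v (b + t *\<^sub>R w)) =
         b \<bullet> (A *v b) + 2 * t * (w \<bullet> (A *v b)) + t^2 * (w \<bullet> (A *v w))"
proof -
  have "b \<bullet> (A *v w) = w \<bullet> (A *v b)" using inner_matrix_sym[OF assms] by blast
  then show ?thesis
    by (simp add: matrix_vector_right_distrib matrix_vector_mult_scaleR inner_add_left
        inner_add_right power2_eq_square algebra_simps)
qed

lemma linear_coeff_eq_0_if_quadratic_nonpos:
  fixes a k :: real
  assumes "\<And>t. 2 * t * a + t^2 * k \<le> 0"
  shows "a = 0"
proof (rule ccontr)
  assume a: "a \<noteq> 0"
  define s where "s = \<bar>k\<bar> + 1"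
  have s: "s > 0" unfolding s_def by simp
  have "2 * (a / s) * a + (a / s)^2 * k = a^2 / s^2 * (2 * s + k)"
    using s by (simp add: field_simps power2_eq_square)
  moreover have "a^2 / s^2 > 0" using a s by simp
  moreover have "2 * s + k > 0" unfolding s_def by (cases "k \<ge> 0") auto
  ultimately have "2 * (a / s) * a + (a / s)^2 * k > 0" by (metis mult_pos_pos)
  with assms[of "a / s"] show False by simp
qed

lemma quadratic_form_scaleR: "(c *\<^sub>R x) \<bullet> (A *v (c *\<^sub>R x)) = c^2 * (x \<bullet> ((A::real^'n^'n) *v x))"
  by (simp add: matrix_vector_mult_scaleR power2_eq_square)

text \<open>Perturbing the maximiser \<open>b\<close> by \<open>t w\<close> with \<open>w \<bottom> b\<close> shows that \<open>A b\<close> has no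
  component orthogonal to \<open>b\<close>.\<close>

lemma rayleigh_maximizer_eigenvector:
  fixes A :: "real^'n^'n"
  assumes sym: "transpose A = A" and V: "subspace V" and inv: "\<forall>x\<in>V. A *v x \<in> V"
    and b: "b \<in> V" "norm b = 1"
    and max: "\<forall>y\<in>V \<inter> sphere 0 1. y \<bullet> (A *v y) \<le> b \<bullet> (A *v b)"
  shows "A *v b = (b \<bullet> (A *v b)) *\<^sub>R b"
proof -
  define l where "l = b \<bullet> (A *v b)"
  have bb: "b \<bullet> b = 1" using b by (simp add: dot_square_norm)
  have orth: "w \<bullet> (A *v b) = 0" if w: "w \<in> V" "w \<bullet> b = 0" for w
  proof (rule linear_coeff_eq_0_if_quadratic_nonpos)
    fix t
    define y where "y = b + t *\<^sub>R w"
    have yy: "y \<bullet> y = 1 + t^2 * (w \<bullet> w)"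
      unfolding y_def using w bb
      by (simp add: inner_add_left inner_add_right inner_commute power2_eq_square)
    then have "0 < y \<bullet> y" by (simp add: add_pos_nonneg)
    then have yn: "norm y > 0" by (simp add: inner_gt_zero_iff)
    have "y \<in> V" unfolding y_def using V b w by (simp add: subspace_add subspace_scale)
    then have "inverse (norm y) *\<^sub>R y \<in> V \<inter> sphere 0 1"
      using yn V by (simp add: subspace_scale)
    then have "(inverse (norm y))^2 * (y \<bullet> (A *v y)) \<le> l"
      using max l_def by (metis quadratic_form_scaleR)
    then have "y \<bullet> (A *v y) \<le> l * (y \<bullet> y)"
      using yn by (simp add: field_simps power2_eq_square dot_square_norm)
    then show "2 * t * (w \<bullet> (A *v b)) + t^2 * (w \<bullet> (A *v w) - l * (w \<bullet> w)) \<le> 0"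
      unfolding yy unfolding y_def quadratic_form_expand[OF sym] l_def by (simp add: algebra_simps)
  qed
  define r where "r = A *v b - l *\<^sub>R b"
  have "r \<in> V" unfolding r_def using V b inv by (simp add: subspace_diff subspace_scale)
  moreover have "(A *v b) \<bullet> b = l" unfolding l_def by (rule inner_commute)
  then have rb: "r \<bullet> b = 0" unfolding r_def by (simp add: inner_diff_left bb)
  ultimately have "r \<bullet> (A *v b) = 0" by (rule orth)
  then have "r \<bullet> r = 0" using rb by (simp add: r_def inner_diff_right)
  then show ?thesis unfolding r_def l_def by simp
qed

lemma unit_eigenvector_in_invariant_subspace:
  fixes A :: "real^'n^'n"
  assumes sym: "transpose A = A" and V: "subspace V" and inv: "\<forall>x\<in>V. A *v x \<in> V"
    and v: "v \<in> V" "v \<noteq> 0"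
  obtains b c where "b \<in> V" "norm b = 1" "A *v b = c *\<^sub>R b"
proof -
  define K where "K = V \<inter> sphere (0::real^'n) 1"
  have "compact K" unfolding K_def by (simp add: V closed_subspace closed_Int_compact)
  moreover have "inverse (norm v) *\<^sub>R v \<in> K" unfolding K_def using v V by (simp add: subspace_scale)
  then have "K \<noteq> {}" by auto
  moreover have "continuous_on K (\<lambda>x. x \<bullet> (A *v x))"
    by (intro continuous_intros linear_continuous_on
        matrix_vector_mul_linear[THEN linear_conv_bounded_linear[THEN iffD1]])
  ultimately obtain b where "b \<in> K" and "\<forall>y\<in>K. y \<bullet> (A *v y) \<le> b \<bullet> (A *v b)"
    using continuous_attains_sup by blast
  then show ?thesis
    using rayleigh_maximizer_eigenvector[OF sym V inv] that unfolding K_def by auto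
qed

lemma dim_orthogonal_complement_in_subspace:
  fixes b :: "real^'n"
  assumes V: "subspace V" and b: "b \<in> V" "b \<bullet> b = 1"
  shows "subspace {x \<in> V. b \<bullet> x = 0}" and "dim V = Suc (dim {x \<in> V. b \<bullet> x = 0})"
proof -
  define V' where "V' = {x \<in> V. b \<bullet> x = 0}"
  have "subspace {x. b \<bullet> x = 0}"
    using subspace_orthogonal_to_vector[of b] by (simp add: orthogonal_def)
  then have "subspace (V \<inter> {x. b \<bullet> x = 0})" by (rule subspace_inter[OF V])
  then show sub': "subspace {x \<in> V. b \<bullet> x = 0}" by (simp add: Int_def)
  have span_eq: "span (insert b V') = V"
  proof
    show "span (insert b V') \<subseteq> V"
      by (rule span_minimal) (use V b V'_def in auto)
    show "V \<subseteq> span (insert b V')"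
    proof
      fix x assume x: "x \<in> V"
      have "x - (b \<bullet> x) *\<^sub>R b \<in> V'"
        unfolding V'_def using x b V by (simp add: subspace_diff subspace_scale inner_diff_right)
      then have "(x - (b \<bullet> x) *\<^sub>R b) + (b \<bullet> x) *\<^sub>R b \<in> span (insert b V')"
        by (intro span_add) (simp_all add: span_base span_scale)
      then show "x \<in> span (insert b V')" by simp
    qed
  qed
  have "span V' = V'" using sub' unfolding V'_def by (rule span_eq_iff[THEN iffD2])
  moreover have "b \<notin> V'" using b(2) by (simp add: V'_def)
  ultimately have "b \<notin> span V'" by metis
  have "dim V = dim (span (insert b V'))" using span_eq by simp
  also have "\<dots> = dim (insert b V')" by (rule dim_span)
  also have "\<dots> = Suc (dim V')" using \<open>b \<notin> span V'\<close> by (simp add: dim_insert)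
  finally show "dim V = Suc (dim {x \<in> V. b \<bullet> x = 0})" unfolding V'_def .
qed

lemma orthonormal_eigenvectors_subspace:
  fixes A :: "real^'n^'n"
  assumes sym: "transpose A = A"
  shows "subspace V \<Longrightarrow> (\<forall>x\<in>V. A *v x \<in> V) \<Longrightarrow> dim V = n \<Longrightarrow>
    \<exists>E. E \<subseteq> V \<and> finite E \<and> card E = n \<and> (\<forall>b\<in>E. norm b = 1 \<and> (\<exists>c. A *v b = c *\<^sub>R b))
       \<and> (\<forall>b\<in>E. \<forall>b'\<in>E. b \<noteq> b' \<longrightarrow> b \<bullet> b' = 0)"
proof (induction n arbitrary: V)
  case 0
  then show ?case by (intro exI[of _ "{}"]) simp
next
  case (Suc n)
  have V: "subspace V" and inv: "\<forall>x\<in>V. A *v x \<in> V" using Suc.prems by auto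
  obtain v where "v \<in> V" "v \<noteq> 0"
    using Suc.prems by (metis dim_eq_0 nat.distinct(1) singletonI subsetI)
  then obtain b c where b: "b \<in> V" "norm b = 1" and eig: "A *v b = c *\<^sub>R b"
    by (rule unit_eigenvector_in_invariant_subspace[OF sym V inv])
  have bb: "b \<bullet> b = 1" using b by (simp add: dot_square_norm)
  define V' where "V' = {x \<in> V. b \<bullet> x = 0}"
  have inv': "\<forall>x\<in>V'. A *v x \<in> V'"
  proof
    fix x assume x: "x \<in> V'"
    have "b \<bullet> (A *v x) = x \<bullet> (A *v b)" using inner_matrix_sym[OF sym] by blast
    also have "\<dots> = c * (b \<bullet> x)" by (simp add: eig inner_commute)
    finally show "A *v x \<in> V'" using x inv V'_def by auto
  qed
  obtain E where E: "E \<subseteq> V'" "finite E" "card E = n"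
      "\<forall>b\<in>E. norm b = 1 \<and> (\<exists>c. A *v b = c *\<^sub>R b)" "\<forall>b\<in>E. \<forall>b'\<in>E. b \<noteq> b' \<longrightarrow> b \<bullet> b' = 0"
    using Suc.IH[OF _ inv'] Suc.prems dim_orthogonal_complement_in_subspace[OF V b(1) bb]
    unfolding V'_def by auto
  have "b \<notin> E" using E(1) bb V'_def by auto
  then show ?case
    using E b eig V'_def by (intro exI[of _ "insert b E"]) (auto simp: inner_commute)
qed

theorem symmetric_matrix_diagonalization:
  fixes A :: "real^'n^'n"
  assumes sym: "transpose A = A"
  obtains Q :: "real^'n^'n" and d where "orthogonal_matrix Q" "A = Q ** diag_mat d ** transpose Q"
proof -
  obtain E where E: "finite E" "card E = CARD('n)" "\<forall>b\<in>E. norm b = 1 \<and> (\<exists>c. A *v b = c *\<^sub>R b)"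
       "\<forall>b\<in>E. \<forall>b'\<in>E. b \<noteq> b' \<longrightarrow> b \<bullet> b' = 0"
    using orthonormal_eigenvectors_subspace[OF sym subspace_UNIV, of "CARD('n)"] by auto
  obtain g where g: "bij_betw g (UNIV::'n set) E"
    using finite_same_card_bij[of "UNIV::'n set" E] E(1,2) by auto
  have gE: "g j \<in> E" for j using g by (auto simp: bij_betw_def)
  have ginj: "g i = g j \<Longrightarrow> i = j" for i j using g by (simp add: bij_betw_def inj_def)
  define ev where "ev b = (SOME c. A *v b = c *\<^sub>R b)" for b
  have ev: "A *v g j = ev (g j) *\<^sub>R g j" for j
    unfolding ev_def using E(3) gE[of j] by (metis (mono_tags, lifting) someI_ex)
  define Q :: "real^'n^'n" where "Q = (\<chi> i j. g j $ i)"
  define d :: "real^'n" where "d = (\<chi> j. ev (g j))"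
  have "g i \<bullet> g j = (if i = j then 1 else 0)" for i j
  proof (cases "i = j")
    case True
    then show ?thesis using E(3) gE[of j] by (simp add: dot_square_norm)
  next
    case False
    then show ?thesis using E(4) gE ginj by metis
  qed
  then have QQ: "transpose Q ** Q = mat 1"
    by (simp add: Q_def transpose_def matrix_matrix_mult_def mat_def vec_eq_iff inner_vec_def)
  then have orth: "orthogonal_matrix Q" by (simp add: orthogonal_matrix)
  have "(A ** Q) $ i $ j = (Q ** diag_mat d) $ i $ j" for i j
  proof -
    have "(A ** Q) $ i $ j = (A *v g j) $ i"
      by (simp add: Q_def matrix_matrix_mult_def matrix_vector_mult_def)
    also have "\<dots> = (Q ** diag_mat d) $ i $ j"
      by (simp add: ev Q_def d_def diag_mat_def matrix_matrix_mult_def if_distrib if_distribR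
          sum.delta cong: if_cong)
    finally show ?thesis .
  qed
  then have "A ** Q = Q ** diag_mat d" by (simp add: vec_eq_iff)
  then have "A = Q ** diag_mat d ** transpose Q"
    using orth by (metis matrix_mul_assoc matrix_mul_rid orthogonal_matrix_def)
  then show ?thesis by (rule that[OF orth])
qed

lemma quadratic_form_diagonalized:
  "x \<bullet> ((Q ** diag_mat d ** transpose Q) *v x) = (\<Sum>i\<in>UNIV. d $ i * ((transpose Q *v x) $ i)^2)"
  using inner_congruence[of x "transpose Q" "diag_mat d"]
  by (simp add: diag_mat_vector_mult inner_vec_def power2_eq_square mult_ac)

lemma eigenvalue_diagonalized:
  assumes "orthogonal_matrix Q"
  shows "(Q *v axis i 1) \<bullet> ((Q ** diag_mat d ** transpose Q) *v (Q *v axis i 1)) = d $ i"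
  using assms unfolding quadratic_form_diagonalized orthogonal_matrix_def
  by (simp add: matrix_vector_mul_assoc axis_def if_distrib if_distribR sum.delta cong: if_cong)

lemma orthogonal_matrix_axis_nonzero:
  assumes "orthogonal_matrix Q"
  shows "Q *v axis i 1 \<noteq> (0::real^'n)"
  using assms by (metis axis_eq_0_iff invertible_def invertible_mult_vec_eq_0 orthogonal_matrix_def
      zero_neq_one)

lemma psd_mat_diagonalization:
  fixes S :: "real^'n^'n"
  assumes "psd_mat S"
  obtains Q :: "real^'n^'n" and d where "orthogonal_matrix Q" "S = Q ** diag_mat d ** transpose Q"
    "\<forall>i. d $ i \<ge> 0"
proof -
  obtain Q :: "real^'n^'n" and d where Q: "orthogonal_matrix Q" "S = Q ** diag_mat d ** transpose Q"
    using symmetric_matrix_diagonalization[OF psd_mat_sym[OF assms]] .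
  moreover have "d $ i \<ge> 0" for i
    using psd_matD[OF assms, of "Q *v axis i 1"] eigenvalue_diagonalized[OF Q(1)] Q(2) by simp
  ultimately show ?thesis using that by blast
qed

lemma pd_mat_diagonalization:
  fixes S :: "real^'n^'n"
  assumes "pd_mat S"
  obtains Q :: "real^'n^'n" and d where "orthogonal_matrix Q" "S = Q ** diag_mat d ** transpose Q"
    "\<forall>i. d $ i > 0"
proof -
  obtain Q :: "real^'n^'n" and d where Q: "orthogonal_matrix Q" "S = Q ** diag_mat d ** transpose Q"
    using symmetric_matrix_diagonalization[OF pd_mat_sym[OF assms]] .
  moreover have "d $ i > 0" for i
    using pd_matD[OF assms orthogonal_matrix_axis_nonzero[OF Q(1)]] eigenvalue_diagonalized[OF Q(1)] Q(2)
    by simp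
  ultimately show ?thesis using that by blast
qed

lemma det_diagonalized:
  assumes "orthogonal_matrix (Q::real^'n^'n)"
  shows "det (Q ** diag_mat d ** transpose Q) = (\<Prod>i\<in>UNIV. d $ i)"
proof -
  have "det Q * det (transpose Q) = 1"
    using assms by (metis det_I det_mul orthogonal_matrix_def)
  then show ?thesis by (simp add: det_mul det_diag_mat)
qed

lemma psd_mat_sqrt_exists:
  fixes S :: "real^'n^'n"
  assumes "psd_mat S"
  shows "\<exists>X. psd_mat X \<and> X ** X = S"
proof -
  obtain Q :: "real^'n^'n" and d where Q: "orthogonal_matrix Q" "S = Q ** diag_mat d ** transpose Q"
    "\<forall>i. d $ i \<ge> 0"
    using psd_mat_diagonalization[OF assms] by blast
  define e :: "real^'n" where "e = (\<chi> i. sqrt (d $ i))"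
  define X where "X = Q ** diag_mat e ** transpose Q"
  have "X ** X = Q ** (diag_mat e ** (transpose Q ** Q) ** diag_mat e) ** transpose Q"
    unfolding X_def by (simp add: matrix_mul_assoc)
  also have "\<dots> = Q ** diag_mat (e * e) ** transpose Q"
    using Q(1) by (simp add: orthogonal_matrix_def diag_mat_mult)
  also have "e * e = d" using Q(3) by (simp add: e_def vec_eq_iff)
  finally have "X ** X = S" using Q(2) by simp
  moreover have "psd_mat X"
    unfolding psd_mat_def X_def quadratic_form_diagonalized
    by (auto simp: matrix_transpose_mul matrix_mul_assoc e_def Q(3) intro!: sum_nonneg)
  ultimately show ?thesis by blast
qed

lemma psd_mat_eigenvector_of_square:
  assumes X: "psd_mat X" and e: "X ** X *v v = \<mu>^2 *\<^sub>R v" and mu: "\<mu> \<ge> 0"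
  shows "X *v v = \<mu> *\<^sub>R v"
proof -
  define w where "w = X *v v - \<mu> *\<^sub>R v"
  have "X *v w = (X ** X) *v v - \<mu> *\<^sub>R (X *v v)"
    by (simp add: w_def matrix_vector_mult_diff_distrib matrix_vector_mult_scaleR
        matrix_vector_mul_assoc)
  also have "\<dots> = - \<mu> *\<^sub>R w" using e by (simp add: w_def algebra_simps power2_eq_square)
  finally have Xw: "X *v w = - \<mu> *\<^sub>R w" .
  have "0 \<le> w \<bullet> (X *v w)" using X psd_matD by blast
  then have "\<mu> * (w \<bullet> w) \<le> 0" by (simp add: Xw)
  show ?thesis
  proof (cases "\<mu> = 0")
    case True
    have "(X *v v) \<bullet> (X *v v) = v \<bullet> (X *v (X *v v))"
      by (metis inner_matrix_transpose psd_mat_sym[OF X])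
    then show ?thesis using e True by (simp add: matrix_vector_mul_assoc)
  next
    case False
    then have "w \<bullet> w \<le> 0" using mu \<open>\<mu> * (w \<bullet> w) \<le> 0\<close> by (simp add: mult_le_0_iff)
    then have "w = 0" by (metis inner_eq_zero_iff inner_ge_zero order_antisym)
    then show ?thesis by (simp add: w_def)
  qed
qed

lemma psd_mat_sqrt_unique:
  fixes Z :: "real^'n^'n"
  assumes X: "psd_mat X" and Z: "psd_mat Z" and eq: "X ** X = Z ** Z"
  shows "X = Z"
proof -
  obtain Q :: "real^'n^'n" and d where Q: "orthogonal_matrix Q" "Z = Q ** diag_mat d ** transpose Q"
    "\<forall>i. d $ i \<ge> 0"
    using psd_mat_diagonalization[OF Z] by blast
  have "Z ** Q = Q ** diag_mat d"
    using Q(1,2) by (simp add: orthogonal_matrix_def matrix_mul_assoc[symmetric])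
  then have col: "Z *v (Q *v axis j 1) = d $ j *\<^sub>R (Q *v axis j 1)" for j
  proof -
    have "Z *v (Q *v axis j 1) = Q *v (diag_mat d *v axis j 1)"
      by (simp add: matrix_vector_mul_assoc \<open>Z ** Q = Q ** diag_mat d\<close>)
    also have "diag_mat d *v axis j 1 = d $ j *\<^sub>R axis j 1"
      by (auto simp: diag_mat_vector_mult axis_def vec_eq_iff)
    finally show ?thesis by (simp add: matrix_vector_mult_scaleR)
  qed
  have "X *v (Q *v axis j 1) = Z *v (Q *v axis j 1)" for j
  proof -
    have "X ** X *v (Q *v axis j 1) = (d $ j)^2 *\<^sub>R (Q *v axis j 1)"
      by (simp add: eq matrix_vector_mul_assoc[symmetric] col matrix_vector_mult_scaleR
          power2_eq_square)
    then show ?thesis using psd_mat_eigenvector_of_square[OF X] Q(3) col by simp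
  qed
  then have "(X ** Q) $ i $ j = (Z ** Q) $ i $ j" for i j
    by (metis matrix_vector_mul_assoc matrix_vector_mult_axis)
  then have "X ** Q = Z ** Q" by (simp add: vec_eq_iff)
  then show ?thesis
    using Q(1) by (metis matrix_mul_assoc matrix_mul_rid orthogonal_matrix_def)
qed

lemma msqrt_psd: "psd_mat S \<Longrightarrow> psd_mat (msqrt S)"
  and msqrt_square: "psd_mat S \<Longrightarrow> msqrt S ** msqrt S = S"
proof -
  assume "psd_mat S"
  then have "\<exists>!X. psd_mat X \<and> X ** X = S"
    using psd_mat_sqrt_exists psd_mat_sqrt_unique by metis
  then have "psd_mat (msqrt S) \<and> msqrt S ** msqrt S = S"
    unfolding msqrt_def by (rule theI')
  then show "psd_mat (msqrt S)" "msqrt S ** msqrt S = S" by auto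
qed

lemma psd_mat_quadratic_form_eq_0:
  assumes "psd_mat M" "v \<bullet> (M *v v) = 0"
  shows "M *v v = 0"
proof -
  define Y where "Y = msqrt M"
  have Y: "psd_mat Y" "Y ** Y = M" using msqrt_psd msqrt_square assms(1) Y_def by auto
  have "(Y *v v) \<bullet> (Y *v v) = v \<bullet> (Y *v (Y *v v))"
    by (metis inner_matrix_transpose psd_mat_sym[OF Y(1)])
  also have "\<dots> = v \<bullet> (M *v v)" using Y(2) by (simp add: matrix_vector_mul_assoc)
  finally have "(Y *v v) \<bullet> (Y *v v) = v \<bullet> (M *v v)" .
  then have "Y *v v = 0" using assms(2) by simp
  then show ?thesis using Y(2) by (metis matrix_vector_mul_assoc matrix_vector_mult_0_right)
qed

lemma pd_mat_msqrt:
  assumes "pd_mat S"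
  shows "pd_mat (msqrt S)"
proof -
  have X: "psd_mat (msqrt S)" "msqrt S ** msqrt S = S"
    using msqrt_psd msqrt_square pd_imp_psd_mat[OF assms] by auto
  have "0 < v \<bullet> (msqrt S *v v)" if v: "v \<noteq> 0" for v
  proof -
    have "v \<bullet> (msqrt S *v v) \<noteq> 0"
    proof
      assume "v \<bullet> (msqrt S *v v) = 0"
      then have "S *v v = 0"
        using psd_mat_quadratic_form_eq_0 X by (metis matrix_vector_mul_assoc matrix_vector_mult_0_right)
      then show False using pd_matD[OF assms v] by simp
    qed
    then show ?thesis using psd_matD[OF X(1)] by (simp add: order_less_le)
  qed
  then show ?thesis using X psd_mat_sym by (simp add: pd_mat_def)
qed

lemma det_pos_if_pd_mat:
  fixes S :: "real^'n^'n"
  assumes "pd_mat S"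
  shows "det S > 0"
proof -
  obtain Q :: "real^'n^'n" and d where "orthogonal_matrix Q" "S = Q ** diag_mat d ** transpose Q"
    "\<forall>i. d $ i > 0"
    by (rule pd_mat_diagonalization[OF assms])
  then show ?thesis by (simp add: det_diagonalized prod_pos)
qed

lemma trace_psd_mult_nonneg:
  assumes "psd_mat A" "psd_mat B"
  shows "0 \<le> trace (A ** B)"
proof -
  define X where "X = msqrt B"
  have X: "psd_mat X" "X ** X = B" using msqrt_psd msqrt_square assms(2) X_def by auto
  have "trace (A ** B) = trace (X ** A ** X)"
    by (metis X(2) matrix_mul_assoc trace_mul_sym)
  also have "X ** A ** X = transpose X ** A ** X" using psd_mat_sym[OF X(1)] by simp
  finally have "trace (A ** B) = trace (transpose X ** A ** X)" .
  then show ?thesis using psd_mat_congruence[OF assms(1), of X] trace_psd_nonneg by simp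
qed

lemma trace_inv_congruence_nonneg:
  fixes Sst :: "real^'m^'m" and D :: "real^'n^'m" and X :: "real^'n^'n"
  assumes "pd_mat Sst" "psd_mat X"
  shows "0 \<le> trace (matrix_inv Sst ** D ** X ** transpose D)"
  using trace_psd_mult_nonneg[OF pd_imp_psd_mat[OF pd_mat_matrix_inv[OF assms(1)]]
      psd_mat_congruence'[OF assms(2)]]
  by (simp add: matrix_mul_assoc)

section \<open>Gaussian divergence\<close>

lemma ln_le_half_diff_inverse:
  fixes x :: real
  assumes "x \<ge> 1"
  shows "ln x \<le> (x - 1 / x) / 2"
proof -
  define f where "f y = (y - 1 / y) / 2 - ln y" for y :: real
  have deriv: "(f has_real_derivative (y - 1)^2 / (2 * y^2)) (at y)" if "y > 0" for y
    unfolding f_def using that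
    by (auto intro!: derivative_eq_intros simp: power2_eq_square field_simps)
  have "f 1 \<le> f x"
  proof (rule DERIV_nonneg_imp_nondecreasing[OF assms])
    fix y :: real assume "1 \<le> y"
    then show "\<exists>z. (f has_real_derivative z) (at y) \<and> z \<ge> 0" using deriv[of y] by force
  qed
  then show ?thesis by (simp add: f_def)
qed

lemma ln_le_quadratic:
  fixes x :: real
  assumes "0 < x" "x \<le> 1"
  shows "ln x \<le> (x - 1) - (x - 1)^2 / 2"
proof -
  define g where "g y = (y - 1) - (y - 1)^2 / 2 - ln y" for y :: real
  have deriv: "(g has_real_derivative - ((y - 1)^2 / y)) (at y)" if "y > 0" for y
    unfolding g_def using that
    by (auto intro!: derivative_eq_intros simp: power2_eq_square field_simps)
  have "g 1 \<le> g x"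
  proof (rule DERIV_nonpos_imp_nonincreasing[OF assms(2)])
    fix y :: real assume "x \<le> y"
    then show "\<exists>z. (g has_real_derivative z) (at y) \<and> z \<le> 0" using deriv[of y] assms(1) by force
  qed
  then show ?thesis by (simp add: g_def)
qed

lemma le_if_square_le_linear:
  fixes t d :: real
  assumes t: "0 \<le> t" and d: "0 \<le> d" and sq: "t^2 \<le> 2 * d * (1 + t)"
  shows "t \<le> 2 * d + sqrt (2 * d)"
proof (rule ccontr)
  assume "\<not> ?thesis"
  then have big: "t > 2 * d + sqrt (2 * d)" by simp
  have s: "sqrt (2 * d) \<ge> 0" using d by simp
  have ts: "t > sqrt (2 * d)" using big d by simp
  have "2 * d = sqrt (2 * d) * sqrt (2 * d)" using d by simp
  also have "\<dots> \<le> t * sqrt (2 * d)" using ts s by (intro mult_right_mono) auto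
  finally have a: "2 * d \<le> t * sqrt (2 * d)" .
  have "t * (2 * d + sqrt (2 * d)) < t * t"
    using big ts s by (intro mult_strict_left_mono) linarith+
  then have "t^2 > 2 * d * (1 + t)" using a by (simp add: algebra_simps power2_eq_square)
  then show False using sq by simp
qed

lemma abs_diff_one_le_if_ln_gap_le:
  fixes x d :: real
  assumes x: "0 < x" and gap: "x - 1 - ln x \<le> d"
  shows "\<bar>x - 1\<bar> \<le> 2 * d + sqrt (2 * d)"
proof -
  have d: "0 \<le> d" using ln_le_minus_one[of x] x gap by linarith
  show ?thesis
  proof (cases "x \<ge> 1")
    case True
    define t where "t = x - 1"
    have t: "t \<ge> 0" using True t_def by simp
    have "x - 1 - (x - 1 / x) / 2 \<le> d" using ln_le_half_diff_inverse[OF True] gap by linarith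
    moreover have "x - 1 - (x - 1 / x) / 2 = t^2 / (2 * (1 + t))"
      using x unfolding t_def by (simp add: field_simps power2_eq_square)
    ultimately have "t^2 / (2 * (1 + t)) \<le> d" by simp
    then have "t^2 \<le> 2 * d * (1 + t)" using t by (simp add: field_simps)
    then show ?thesis using le_if_square_le_linear[OF t d] True unfolding t_def by simp
  next
    case False
    define t where "t = 1 - x"
    have t: "t \<ge> 0" using False t_def by simp
    have "x - 1 - ((x - 1) - (x - 1)^2 / 2) \<le> d" using ln_le_quadratic[OF x] False gap by simp
    then have "t^2 \<le> 2 * d" unfolding t_def by (simp add: power2_eq_square algebra_simps)
    then have "t \<le> sqrt (2 * d)" using t by (simp add: real_le_rsqrt)
    then show ?thesis unfolding t_def using False d by simp
  qed
qed

text \<open>\<open>gauss_div M S\<close> is twice the Kullback--Leibler divergence of \<open>N(0, M)\<close> from \<open>N(0, S)\<close>.\<close>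

definition gauss_div :: "real^'n^'n \<Rightarrow> real^'n^'n \<Rightarrow> real" where
  "gauss_div M S = trace (matrix_inv S ** M) - real CARD('n) - ln (det (matrix_inv S ** M))"

lemma ln_det_matrix_inv_mult:
  assumes "pd_mat (M::real^'n^'n)" "pd_mat S"
  shows "ln (det (matrix_inv S ** M)) = ln (det M) - ln (det S)"
proof -
  have "det M > 0" "det S > 0" using assms det_pos_if_pd_mat by auto
  then show ?thesis
    using assms by (simp add: det_mul det_matrix_inv[OF pd_mat_invertible] ln_div)
qed

lemma gauss_div_self: "pd_mat (M::real^'n^'n) \<Longrightarrow> gauss_div M M = 0"
  by (simp add: gauss_div_def matrix_inv_left pd_mat_invertible trace_I)

lemma pd_mat_simultaneous_diagonalization:
  fixes M S :: "real^'n^'n"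
  assumes M: "pd_mat M" and S: "pd_mat S"
  obtains W :: "real^'n^'n" and d where "invertible W" "S = transpose W ** W"
    "M = transpose W ** diag_mat d ** W" "\<forall>i. 0 < d $ i"
proof -
  define X where "X = msqrt S"
  have Xpd: "pd_mat X" unfolding X_def by (rule pd_mat_msqrt[OF S])
  have XX: "X ** X = S" unfolding X_def by (rule msqrt_square[OF pd_imp_psd_mat[OF S]])
  have invX: "invertible X" by (rule pd_mat_invertible[OF Xpd])
  have Xs: "transpose X = X" by (rule pd_mat_sym[OF Xpd])
  define Z where "Z = matrix_inv X"
  have Zs: "transpose Z = Z" using matrix_inv_transpose[OF invX] Xs by (simp add: Z_def)
  have ZX: "Z ** X = mat 1" and XZ: "X ** Z = mat 1"
    unfolding Z_def using invX by (simp_all add: matrix_inv_left matrix_inv_right)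
  have "pd_mat (transpose Z ** M ** Z)"
    unfolding Z_def
    by (rule pd_mat_congruence[OF M invertible_mult_vec_eq_0[OF invertible_matrix_inv[OF invX]]])
  then obtain Q :: "real^'n^'n" and d where Q: "orthogonal_matrix Q"
    "Z ** M ** Z = Q ** diag_mat d ** transpose Q" "\<forall>i. d $ i > 0"
    unfolding Zs by (rule pd_mat_diagonalization)
  define W where "W = transpose Q ** X"
  have invW: "invertible W"
    unfolding W_def using Q(1) invX
    by (intro invertible_mult) (auto simp: invertible_def orthogonal_matrix_def)
  have WW: "transpose W ** W = S"
    using Q(1) unfolding W_def
    by (simp add: matrix_transpose_mul Xs XX orthogonal_matrix_def matrix_mul_assoc
        flip: matrix_mul_assoc[of X Q])
  have "transpose W ** diag_mat d ** W = X ** (Z ** M ** Z) ** X"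
    unfolding W_def Q(2) by (simp add: matrix_transpose_mul Xs matrix_mul_assoc)
  also have "\<dots> = (X ** Z) ** M ** (Z ** X)" by (simp add: matrix_mul_assoc)
  also have "\<dots> = M" by (simp add: XZ ZX)
  finally have "M = transpose W ** diag_mat d ** W" ..
  with invW WW Q(3) show ?thesis using that by metis
qed

lemma gauss_div_diagonalized:
  fixes W :: "real^'n^'n"
  assumes W: "invertible W" and S: "S = transpose W ** W" and M: "M = transpose W ** diag_mat d ** W"
    and d: "\<forall>i. 0 < d $ i"
  shows "gauss_div M S = (\<Sum>i\<in>UNIV. d $ i - 1 - ln (d $ i))"
proof -
  have "matrix_inv S ** M = matrix_inv W ** diag_mat d ** W"
  proof -
    have "invertible (transpose W)" by (rule transpose_invertible[OF W])
    then have "matrix_inv S = matrix_inv W ** matrix_inv (transpose W)"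
      unfolding S by (rule matrix_inv_mult[OF _ W])
    then have "matrix_inv S ** M
        = matrix_inv W ** (matrix_inv (transpose W) ** transpose W) ** diag_mat d ** W"
      unfolding M by (simp add: matrix_mul_assoc)
    then show ?thesis by (simp add: matrix_inv_left[OF transpose_invertible[OF W]])
  qed
  moreover have "trace (matrix_inv W ** diag_mat d ** W) = (\<Sum>i\<in>UNIV. d $ i)"
    using trace_mul_sym[of "matrix_inv W ** diag_mat d" W] matrix_inv_right[OF W]
    by (simp add: matrix_mul_assoc trace_diag_mat flip: matrix_mul_assoc[of W "matrix_inv W"])
  moreover have "det (matrix_inv W ** diag_mat d ** W) = (\<Prod>i\<in>UNIV. d $ i)"
  proof -
    have "det W \<noteq> 0" using W invertible_det_nz by blast
    then show ?thesis by (simp add: det_mul det_diag_mat det_matrix_inv[OF W])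
  qed
  moreover have "ln (\<Prod>i\<in>UNIV. d $ i) = (\<Sum>i\<in>UNIV. ln (d $ i))"
    by (rule ln_prod) (use d in \<open>auto simp: less_le\<close>)
  ultimately show ?thesis
    unfolding gauss_div_def by (simp add: sum_subtractf)
qed

lemma gauss_div_nonneg:
  fixes M S :: "real^'n^'n"
  assumes "pd_mat M" "pd_mat S"
  shows "0 \<le> gauss_div M S"
proof -
  obtain W :: "real^'n^'n" and d where "invertible W" "S = transpose W ** W"
    "M = transpose W ** diag_mat d ** W" and d: "\<forall>i. 0 < d $ i"
    by (rule pd_mat_simultaneous_diagonalization[OF assms])
  then have "gauss_div M S = (\<Sum>i\<in>UNIV. d $ i - 1 - ln (d $ i))"
    by (rule gauss_div_diagonalized)
  moreover have "0 \<le> d $ i - 1 - ln (d $ i)" for i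
    using d ln_le_minus_one[of "d $ i"] by simp
  ultimately show ?thesis by (simp add: sum_nonneg)
qed

lemma quadratic_form_diff_le_gauss_div:
  fixes M S :: "real^'n^'n"
  assumes "pd_mat M" "pd_mat S"
  shows "\<bar>v \<bullet> (M *v v) - v \<bullet> (S *v v)\<bar>
    \<le> (2 * gauss_div M S + sqrt (2 * gauss_div M S)) * (v \<bullet> (S *v v))"
proof -
  obtain W :: "real^'n^'n" and d where W: "invertible W" and S: "S = transpose W ** W"
    and M: "M = transpose W ** diag_mat d ** W" and d: "\<forall>i. 0 < d $ i"
    by (rule pd_mat_simultaneous_diagonalization[OF assms])
  define w where "w = W *v v"
  have qS: "v \<bullet> (S *v v) = (\<Sum>i\<in>UNIV. (w $ i)^2)"
    using inner_congruence[of v W "mat 1"] unfolding S w_def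
    by (simp add: inner_vec_def power2_eq_square)
  have qM: "v \<bullet> (M *v v) = (\<Sum>i\<in>UNIV. d $ i * (w $ i)^2)"
    using inner_congruence[of v W "diag_mat d"] unfolding M w_def
    by (simp add: diag_mat_vector_mult inner_vec_def power2_eq_square mult_ac)
  define c where "c = 2 * gauss_div M S + sqrt (2 * gauss_div M S)"
  have "\<bar>d $ i - 1\<bar> \<le> c" for i
  proof -
    have "d $ i - 1 - ln (d $ i) \<le> (\<Sum>i\<in>UNIV. d $ i - 1 - ln (d $ i))"
      using d ln_le_minus_one by (intro member_le_sum) (auto simp: algebra_simps)
    then have "d $ i - 1 - ln (d $ i) \<le> gauss_div M S"
      using gauss_div_diagonalized[OF W S M d] by simp
    then show ?thesis unfolding c_def using d by (intro abs_diff_one_le_if_ln_gap_le) auto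
  qed
  then have "\<bar>\<Sum>i\<in>UNIV. (d $ i - 1) * (w $ i)^2\<bar> \<le> (\<Sum>i\<in>UNIV. c * (w $ i)^2)"
    by (intro order_trans[OF sum_abs] sum_mono) (simp add: abs_mult mult_right_mono)
  then show ?thesis
    unfolding qS qM c_def[symmetric] by (simp add: sum_distrib_left algebra_simps sum_subtractf)
qed

lemma limit_eq_if_gauss_div_tendsto_0:
  fixes X Y :: "nat \<Rightarrow> real^'n^'n"
  assumes X: "X \<longlonglongrightarrow> X0" and Y: "Y \<longlonglongrightarrow> Y0"
    and pd: "\<And>j. pd_mat (X j)" "\<And>j. pd_mat (Y j)"
    and div: "(\<lambda>j. gauss_div (Y j) (X j)) \<longlonglongrightarrow> 0"
  shows "Y0 = X0"
proof -
  have psd: "psd_mat X0" "psd_mat Y0"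
    using psd_mat_limit[OF X] psd_mat_limit[OF Y] pd pd_imp_psd_mat by auto
  have "v \<bullet> ((Y0 - X0) *v v) = 0" for v
  proof -
    have lim_diff: "(\<lambda>j. \<bar>v \<bullet> (Y j *v v) - v \<bullet> (X j *v v)\<bar>)
        \<longlonglongrightarrow> \<bar>v \<bullet> (Y0 *v v) - v \<bullet> (X0 *v v)\<bar>"
      by (intro tendsto_intros tendsto_matrix_vector_mult X Y)
    have "(\<lambda>j. (2 * gauss_div (Y j) (X j) + sqrt (2 * gauss_div (Y j) (X j))) * (v \<bullet> (X j *v v)))
        \<longlonglongrightarrow> (2 * 0 + sqrt (2 * 0)) * (v \<bullet> (X0 *v v))"
      by (intro tendsto_intros tendsto_matrix_vector_mult X div)
    then have lim_bound: "(\<lambda>j. (2 * gauss_div (Y j) (X j) + sqrt (2 * gauss_div (Y j) (X j)))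
        * (v \<bullet> (X j *v v))) \<longlonglongrightarrow> 0"
      by simp
    have "\<bar>v \<bullet> (Y0 *v v) - v \<bullet> (X0 *v v)\<bar> \<le> 0"
      by (rule LIMSEQ_le[OF lim_diff lim_bound])
        (use quadratic_form_diff_le_gauss_div[OF pd(2) pd(1)] in auto)
    then show ?thesis by (simp add: matrix_vector_mult_diff_rdistrib inner_diff_right)
  qed
  then have "Y0 - X0 = 0"
    using psd by (intro symmetric_eq_0_if_quadratic_form_0) (simp_all add: transpose_diff psd_mat_sym)
  then show ?thesis by simp
qed

section \<open>The Riccati recursion\<close>

lemma invertible_one_plus_psd_mult:
  fixes S C :: "real^'m^'m"
  assumes S: "psd_mat S" and C: "psd_mat C"
  shows "invertible (mat 1 + C ** S)"
proof (rule invertible_if_inj)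
  fix v assume "(mat 1 + C ** S) *v v = 0"
  then have v: "v = - (C *v (S *v v))"
    by (simp add: matrix_vector_mult_add_rdistrib matrix_vector_mul_assoc eq_neg_iff_add_eq_0)
  then have "v \<bullet> (S *v v) = - ((S *v v) \<bullet> (C *v (S *v v)))"
    by (metis inner_commute inner_minus_right)
  moreover have "0 \<le> (S *v v) \<bullet> (C *v (S *v v))" by (rule psd_matD[OF C])
  moreover have "0 \<le> v \<bullet> (S *v v)" by (rule psd_matD[OF S])
  ultimately have "v \<bullet> (S *v v) = 0" by linarith
  then have "S *v v = 0" by (rule psd_mat_quadratic_form_eq_0[OF S])
  then show "v = 0" using v by simp
qed

text \<open>Unlike its definition, this form of \<open>Spi_of\<close> involves no square root and is visibly
  continuous in \<open>(S, C)\<close> on positive semidefinite matrices.\<close>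

lemma Spi_of_eq:
  fixes S C :: "real^'m^'m"
  assumes S: "psd_mat S" and C: "psd_mat C"
  shows "Spi_of S C = S ** matrix_inv (mat 1 + C ** S)"
proof -
  define X where "X = msqrt S"
  have Xp: "psd_mat X" and XX: "X ** X = S" unfolding X_def using msqrt_psd msqrt_square S by auto
  define E where "E = mat 1 + X ** C ** X"
  have "psd_mat (X ** C ** X)" using psd_mat_congruence[OF C, of X] psd_mat_sym[OF Xp] by simp
  then have invE: "invertible E" unfolding E_def by (intro pd_mat_invertible pd_mat_add_psd pd_mat_one)
  have invF: "invertible (mat 1 + C ** S)" by (rule invertible_one_plus_psd_mult[OF S C])
  have EX: "E ** X = X ** (mat 1 + C ** S)"
    unfolding E_def XX[symmetric] by (simp add: matrix_ring_simps matrix_mul_assoc)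
  have "matrix_inv E ** X
      = matrix_inv E ** (X ** (mat 1 + C ** S)) ** matrix_inv (mat 1 + C ** S)"
    by (simp add: matrix_mul_assoc[symmetric] matrix_inv_right[OF invF])
  also have "\<dots> = X ** matrix_inv (mat 1 + C ** S)"
    by (simp add: EX[symmetric] matrix_mul_assoc matrix_inv_left[OF invE])
  finally have "X ** matrix_inv E ** X = X ** X ** matrix_inv (mat 1 + C ** S)"
    by (simp add: matrix_mul_assoc[symmetric])
  then show ?thesis
    unfolding Spi_of_def X_def[symmetric] E_def[symmetric] XX by (simp add: matrix_mul_assoc)
qed

lemma Spi_of_pd_eq:
  fixes S C :: "real^'m^'m"
  assumes S: "pd_mat S" and C: "psd_mat C"
  shows "Spi_of S C = matrix_inv (matrix_inv S + C)"
proof -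
  have invS: "invertible S" by (rule pd_mat_invertible[OF S])
  have invG: "invertible (matrix_inv S + C)"
    by (rule pd_mat_invertible[OF pd_mat_add_psd[OF pd_mat_matrix_inv[OF S] C]])
  have "mat 1 + C ** S = (matrix_inv S + C) ** S"
    by (simp add: matrix_ring_simps matrix_inv_left[OF invS])
  then have "Spi_of S C = S ** (matrix_inv S ** matrix_inv (matrix_inv S + C))"
    using Spi_of_eq[OF pd_imp_psd_mat[OF S] C] by (simp add: matrix_inv_mult[OF invG invS])
  then show ?thesis by (simp add: matrix_mul_assoc matrix_inv_right[OF invS])
qed

lemma pd_mat_Spi_of: "pd_mat S \<Longrightarrow> psd_mat C \<Longrightarrow> pd_mat (Spi_of S C)"
  by (simp add: Spi_of_pd_eq pd_mat_matrix_inv pd_mat_add_psd)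

lemma matrix_inv_Spi_of: "pd_mat S \<Longrightarrow> psd_mat C \<Longrightarrow> matrix_inv (Spi_of S C) = matrix_inv S + C"
  by (simp add: Spi_of_pd_eq matrix_inv_matrix_inv pd_mat_invertible pd_mat_matrix_inv pd_mat_add_psd)

lemma tendsto_Spi_of:
  fixes S C :: "nat \<Rightarrow> real^'m^'m"
  assumes S: "S \<longlonglongrightarrow> S0" and C: "C \<longlonglongrightarrow> C0"
    and S_psd: "\<And>j. psd_mat (S j)" and C_psd: "\<And>j. psd_mat (C j)" and C0: "psd_mat C0"
  shows "(\<lambda>j. Spi_of (S j) (C j)) \<longlonglongrightarrow> Spi_of S0 C0"
proof -
  have S0: "psd_mat S0" by (rule psd_mat_limit[OF S S_psd])
  have "(\<lambda>j. mat 1 + C j ** S j) \<longlonglongrightarrow> mat 1 + C0 ** S0"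
    by (intro tendsto_add tendsto_const tendsto_matrix_mult C S)
  then have "(\<lambda>j. matrix_inv (mat 1 + C j ** S j)) \<longlonglongrightarrow> matrix_inv (mat 1 + C0 ** S0)"
    by (rule tendsto_matrix_inv[OF _ invertible_one_plus_psd_mult[OF S0 C0]])
  then have "(\<lambda>j. S j ** matrix_inv (mat 1 + C j ** S j)) \<longlonglongrightarrow> S0 ** matrix_inv (mat 1 + C0 ** S0)"
    by (intro tendsto_matrix_mult S)
  then show ?thesis by (simp add: Spi_of_eq S_psd C_psd S0 C0)
qed

lemma psd_mat_Cmat:
  assumes "pd_mat Rk" "psd_mat Pi1" "eps > 0"
  shows "psd_mat (Cmat eps Rk Bk Pi1)"
  unfolding Cmat_def using assms
  by (intro psd_mat_scaleR psd_mat_add psd_mat_congruence) (auto simp: pd_imp_psd_mat)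


lemma matrix_completed_square:
  fixes Pi1 A :: "real^'n^'n" and B :: "real^'m^'n" and H0 Sst :: "real^'m^'m" and P :: "real^'n^'m"
  assumes Pis: "transpose Pi1 = Pi1" and H0s: "transpose H0 = H0" and Ss: "transpose Sst = Sst"
    and HS: "(H0 + transpose B ** Pi1 ** B) ** Sst = eps *\<^sub>R mat 1" and eps: "eps \<noteq> 0"
  defines "K \<equiv> transpose B ** Pi1 ** A"
  defines "Pst \<equiv> - ((1 / eps) *\<^sub>R (Sst ** K))"
  defines "H \<equiv> H0 + transpose B ** Pi1 ** B"
  shows "transpose (A + B ** P) ** Pi1 ** (A + B ** P) + transpose P ** H0 ** P
           - (transpose A ** Pi1 ** A - (1 / eps) *\<^sub>R (transpose K ** Sst ** K))
         = transpose (P - Pst) ** H ** (P - Pst)"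
proof -
  have Hs: "transpose H = H"
    unfolding H_def using Pis H0s by (simp add: matrix_ring_simps matrix_mul_assoc)
  have HP: "H ** Pst = - K"
  proof -
    have "H ** Pst = - ((1 / eps) *\<^sub>R ((H ** Sst) ** K))"
      unfolding Pst_def by (simp add: matrix_ring_simps matrix_mul_assoc)
    also have "\<dots> = - K" using eps HS by (simp add: H_def matrix_ring_simps)
    finally show ?thesis .
  qed
  have PH: "transpose Pst ** H = - transpose K"
    using Hs HP by (metis matrix_transpose_mul transpose_uminus)
  have Kt: "transpose K = transpose A ** Pi1 ** B"
    unfolding K_def using Pis by (simp add: matrix_transpose_mul matrix_mul_assoc)
  have PHP: "transpose Pst ** H ** Pst = (1 / eps) *\<^sub>R (transpose K ** Sst ** K)"
  proof -
    have "transpose Pst ** H ** Pst = - (transpose K ** Pst)" by (simp add: PH matrix_ring_simps)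
    also have "\<dots> = (1 / eps) *\<^sub>R (transpose K ** Sst ** K)"
      unfolding Pst_def by (simp add: matrix_ring_simps matrix_mul_assoc)
    finally show ?thesis .
  qed
  have R: "transpose (P - Pst) ** H ** (P - Pst)
      = transpose P ** H ** P - transpose P ** (H ** Pst) - (transpose Pst ** H) ** P
        + transpose Pst ** H ** Pst"
    by (simp add: matrix_ring_simps matrix_mul_assoc algebra_simps)
  have L: "transpose (A + B ** P) ** Pi1 ** (A + B ** P) = transpose A ** Pi1 ** A
      + transpose K ** P + transpose P ** K + transpose P ** (transpose B ** Pi1 ** B) ** P"
    unfolding Kt K_def using Pis by (simp add: matrix_ring_simps matrix_mul_assoc algebra_simps)
  show ?thesis
    unfolding R L HP PH PHP unfolding H_def Pst_def
    by (simp add: matrix_ring_simps matrix_mul_assoc algebra_simps)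
qed

text \<open>The trace form of the completed square: the cost of a stage plus the change of the
  cost-to-go \<open>tr(\<Pi> X)/2\<close> equals the cost of the optimal step plus the penalties for deviating
  from it.\<close>

lemma trace_stage_identity:
  fixes A Pi' Pi X W :: "real^'n^'n" and B :: "real^'m^'n" and R S Sst Sg :: "real^'m^'m"
    and P Pst :: "real^'n^'m" and eps :: real
  defines "H0 \<equiv> R + eps *\<^sub>R matrix_inv S"
  assumes Heq: "eps *\<^sub>R matrix_inv Sst = H0 + transpose B ** Pi' ** B"
    and square: "transpose (A + B ** P) ** Pi' ** (A + B ** P) + transpose P ** H0 ** P - Pi
      = transpose (P - Pst) ** (eps *\<^sub>R matrix_inv Sst) ** (P - Pst)"
  shows "trace (R ** (Sg + P ** X ** transpose P)) + eps * trace (matrix_inv S ** (Sg + P ** X ** transpose P))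
      + trace (Pi' ** ((A + B ** P) ** X ** transpose (A + B ** P) + B ** Sg ** transpose B + W))
      - trace (Pi ** X)
    = eps * trace (matrix_inv Sst ** Sg) + eps * trace (matrix_inv Sst ** (P - Pst) ** X ** transpose (P - Pst))
      + trace (Pi' ** W)"
proof -
  define G where "G = transpose B ** Pi' ** B"
  define AB where "AB = A + B ** P"
  define D where "D = P - Pst"
  have trH0: "trace (R ** M) + eps * trace (matrix_inv S ** M) = trace (H0 ** M)" for M :: "real^'m^'m"
    unfolding H0_def by (simp add: matrix_ring_simps trace_add trace_scaleR)
  have "trace (H0 ** (Sg + P ** X ** transpose P)) = trace (H0 ** Sg) + trace (transpose P ** H0 ** P ** X)"
    using trace_mult_cycle[of "H0 ** P" X "transpose P"]
    by (simp add: matrix_ring_simps trace_add matrix_mul_assoc)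
  moreover have "trace (Pi' ** (AB ** X ** transpose AB + B ** Sg ** transpose B + W))
      = trace (transpose AB ** Pi' ** AB ** X) + trace (G ** Sg) + trace (Pi' ** W)"
    using trace_mult_cycle[of "Pi' ** AB" X "transpose AB"] trace_mult_cycle[of "Pi' ** B" Sg "transpose B"]
    unfolding G_def by (simp add: matrix_add_ldistrib trace_add matrix_mul_assoc)
  moreover have "trace (Pi ** X) = trace (transpose AB ** Pi' ** AB ** X) + trace (transpose P ** H0 ** P ** X)
      - trace (transpose D ** (H0 + G) ** D ** X)"
  proof -
    have "Pi = transpose AB ** Pi' ** AB + transpose P ** H0 ** P - transpose D ** (H0 + G) ** D"
      using square unfolding AB_def D_def G_def Heq by (simp add: algebra_simps)
    then show ?thesis by (simp add: matrix_ring_simps trace_add trace_sub)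
  qed
  moreover have "eps * trace (matrix_inv Sst ** D ** X ** transpose D) = trace (transpose D ** (H0 + G) ** D ** X)"
    using trace_mult_cycle[of "(H0 + G) ** D" X "transpose D"]
    by (simp add: trace_scaleR[symmetric] matrix_ring_simps Heq[folded G_def, symmetric] matrix_mul_assoc)
  moreover have "eps * trace (matrix_inv Sst ** Sg) = trace (H0 ** Sg) + trace (G ** Sg)"
  proof -
    have "eps * trace (matrix_inv Sst ** Sg) = trace ((eps *\<^sub>R matrix_inv Sst) ** Sg)"
      by (simp add: trace_scaleR matrix_scaleR_left)
    then show ?thesis by (simp add: Heq[folded G_def] matrix_add_rdistrib trace_add)
  qed
  ultimately show ?thesis unfolding trH0 AB_def[symmetric] D_def[symmetric] by simp
qed

locale entropic_lq =
  fixes eps :: real and T :: nat and A :: "nat \<Rightarrow> real^'n^'n" and B :: "nat \<Rightarrow> real^'m^'n"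
    and R :: "nat \<Rightarrow> real^'m^'m" and F :: "real^'n^'n"
  assumes eps_pos: "eps > 0" and R_pd: "\<forall>k<T. pd_mat (R k)" and F_psd: "psd_mat F"
begin

abbreviation riccati :: "(nat \<Rightarrow> real^'m^'m) \<Rightarrow> nat \<Rightarrow> real^'n^'n" where
  "riccati \<equiv> PiM eps T A B R F"

abbreviation policy_cov :: "(nat \<Rightarrow> real^'m^'m) \<Rightarrow> nat \<Rightarrow> real^'m^'m" where
  "policy_cov \<equiv> SpiM eps T A B R F"

abbreviation policy_gain :: "(nat \<Rightarrow> real^'m^'m) \<Rightarrow> nat \<Rightarrow> real^'n^'m" where
  "policy_gain \<equiv> PgainM eps T A B R F"

lemma riccati_T: "riccati S T = F"
  by (simp add: PiM_def)

lemma riccati_step: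
  assumes "k < T"
  shows "riccati S k = transpose (A k) ** riccati S (Suc k) ** A k
    - (1 / eps) *\<^sub>R (transpose (A k) ** riccati S (Suc k) ** B k
        ** policy_cov S k ** transpose (B k) ** riccati S (Suc k) ** A k)"
proof -
  have "T - k = Suc (T - Suc k)" "T - Suc (T - Suc k) = k" using assms by simp_all
  then show ?thesis by (simp add: PiM_def Let_def SpiM_def)
qed

lemma policy_cov_step:
  assumes k: "k < T" and S: "pd_mat (S k)" and Pi: "psd_mat (riccati S (Suc k))"
  shows "pd_mat (policy_cov S k)"
    and "eps *\<^sub>R matrix_inv (policy_cov S k)
      = R k + eps *\<^sub>R matrix_inv (S k) + transpose (B k) ** riccati S (Suc k) ** B k"
proof -
  have C: "psd_mat (Cmat eps (R k) (B k) (riccati S (Suc k)))"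
    using R_pd k by (intro psd_mat_Cmat Pi eps_pos) simp
  show "pd_mat (policy_cov S k)" unfolding SpiM_def by (rule pd_mat_Spi_of[OF S C])
  show "eps *\<^sub>R matrix_inv (policy_cov S k)
      = R k + eps *\<^sub>R matrix_inv (S k) + transpose (B k) ** riccati S (Suc k) ** B k"
  proof -
    have "matrix_inv (policy_cov S k) = matrix_inv (S k) + Cmat eps (R k) (B k) (riccati S (Suc k))"
      unfolding SpiM_def by (rule matrix_inv_Spi_of[OF S C])
    then show ?thesis unfolding Cmat_def using eps_pos by (simp add: scaleR_add_right algebra_simps)
  qed
qed

lemma riccati_completed_square:
  assumes k: "k < T" and S: "pd_mat (S k)" and Pi: "psd_mat (riccati S (Suc k))"
  shows "transpose (A k + B k ** P) ** riccati S (Suc k) ** (A k + B k ** P)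
      + transpose P ** (R k + eps *\<^sub>R matrix_inv (S k)) ** P - riccati S k
    = transpose (P - policy_gain S k) ** (eps *\<^sub>R matrix_inv (policy_cov S k)) ** (P - policy_gain S k)"
proof -
  let ?Pi = "riccati S (Suc k)" and ?Sst = "policy_cov S k"
    and ?H0 = "R k + eps *\<^sub>R matrix_inv (S k)"
  have Sst: "pd_mat ?Sst" and Heq: "eps *\<^sub>R matrix_inv ?Sst = ?H0 + transpose (B k) ** ?Pi ** B k"
    using policy_cov_step[OF k S Pi] by simp_all
  have "pd_mat ?H0"
    using R_pd k eps_pos pd_imp_psd_mat[OF pd_mat_matrix_inv[OF S]]
    by (intro pd_mat_add_psd psd_mat_scaleR) auto
  then have H0s: "transpose ?H0 = ?H0" by (rule pd_mat_sym)
  have "(?H0 + transpose (B k) ** ?Pi ** B k) ** ?Sst = eps *\<^sub>R mat 1"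
    unfolding Heq[symmetric] by (simp add: matrix_scaleR_left matrix_inv_left[OF pd_mat_invertible[OF Sst]])
  from matrix_completed_square[where A = "A k" and P = P, OF psd_mat_sym[OF Pi] H0s pd_mat_sym[OF Sst] this]
  have "transpose (A k + B k ** P) ** ?Pi ** (A k + B k ** P) + transpose P ** ?H0 ** P
      - (transpose (A k) ** ?Pi ** A k - (1 / eps) *\<^sub>R (transpose (transpose (B k) ** ?Pi ** A k)
          ** ?Sst ** (transpose (B k) ** ?Pi ** A k)))
    = transpose (P - - ((1 / eps) *\<^sub>R (?Sst ** (transpose (B k) ** ?Pi ** A k))))
      ** (?H0 + transpose (B k) ** ?Pi ** B k)
      ** (P - - ((1 / eps) *\<^sub>R (?Sst ** (transpose (B k) ** ?Pi ** A k))))"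
    using eps_pos by simp
  moreover have "- ((1 / eps) *\<^sub>R (?Sst ** (transpose (B k) ** ?Pi ** A k))) = policy_gain S k"
    by (simp add: PgainM_def matrix_mul_assoc)
  moreover have "transpose (A k) ** ?Pi ** A k - (1 / eps) *\<^sub>R (transpose (transpose (B k) ** ?Pi ** A k)
      ** ?Sst ** (transpose (B k) ** ?Pi ** A k)) = riccati S k"
    unfolding riccati_step[OF k] using psd_mat_sym[OF Pi]
    by (simp add: matrix_transpose_mul matrix_mul_assoc)
  ultimately show ?thesis unfolding Heq by simp
qed

lemma riccati_psd:
  assumes S: "\<forall>k<T. pd_mat (S k)"
  shows "k \<le> T \<Longrightarrow> psd_mat (riccati S k)"
proof (induction k rule: inc_induct)
  case base
  then show ?case using F_psd by (simp add: riccati_T)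
next
  case (step k)
  let ?P = "policy_gain S k" and ?H0 = "R k + eps *\<^sub>R matrix_inv (S k)"
  have k: "k < T" using step by simp
  have "riccati S k = transpose (A k + B k ** ?P) ** riccati S (Suc k) ** (A k + B k ** ?P)
      + transpose ?P ** ?H0 ** ?P"
    using riccati_completed_square[OF k _ step.IH, of ?P] S k by (simp add: algebra_simps)
  moreover have "psd_mat ?H0"
    using R_pd S k eps_pos by (intro psd_mat_add psd_mat_scaleR pd_imp_psd_mat pd_mat_matrix_inv) auto
  ultimately show ?case by (simp add: psd_mat_add psd_mat_congruence step.IH)
qed

lemma pd_mat_policy_cov:
  assumes "\<forall>k<T. pd_mat (S k)" "k < T"
  shows "pd_mat (policy_cov S k)"
  using assms by (intro policy_cov_step riccati_psd) auto

lemma tendsto_policy_cov_if_tendsto_riccati: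
  fixes S :: "nat \<Rightarrow> nat \<Rightarrow> real^'m^'m"
  assumes pd: "\<forall>j. \<forall>k<T. pd_mat (S j k)" and lim: "\<forall>k<T. (\<lambda>j. S j k) \<longlonglongrightarrow> S0 k" and k: "k < T"
    and Pi: "(\<lambda>j. riccati (S j) (Suc k)) \<longlonglongrightarrow> riccati S0 (Suc k)" and Pi0: "psd_mat (riccati S0 (Suc k))"
  shows "(\<lambda>j. policy_cov (S j) k) \<longlonglongrightarrow> policy_cov S0 k"
proof -
  have Rk: "pd_mat (R k)" using R_pd k by blast
  have Sk: "(\<lambda>j. S j k) \<longlonglongrightarrow> S0 k" "psd_mat (S j k)" for j
    using lim pd k pd_imp_psd_mat by blast+
  have "psd_mat (riccati (S j) (Suc k))" for j using pd k by (intro riccati_psd) auto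
  moreover have "(\<lambda>j. Cmat eps (R k) (B k) (riccati (S j) (Suc k)))
      \<longlonglongrightarrow> Cmat eps (R k) (B k) (riccati S0 (Suc k))"
    unfolding Cmat_def by (intro tendsto_scaleR tendsto_add tendsto_const tendsto_matrix_mult Pi)
  ultimately show ?thesis
    unfolding SpiM_def
    by (intro tendsto_Spi_of Sk psd_mat_Cmat[OF Rk _ eps_pos] psd_mat_Cmat[OF Rk Pi0 eps_pos])
qed

lemma tendsto_riccati:
  fixes S :: "nat \<Rightarrow> nat \<Rightarrow> real^'m^'m"
  assumes pd: "\<forall>j. \<forall>k<T. pd_mat (S j k)" and lim: "\<forall>k<T. (\<lambda>j. S j k) \<longlonglongrightarrow> S0 k"
  shows "(\<lambda>j. riccati (S j) k) \<longlonglongrightarrow> riccati S0 k \<and> psd_mat (riccati S0 k)"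
proof -
  have "d \<le> T \<Longrightarrow> (\<lambda>j. PiRev eps T A B R F (S j) d) \<longlonglongrightarrow> PiRev eps T A B R F S0 d
      \<and> psd_mat (PiRev eps T A B R F S0 d)" for d
  proof (induction d)
    case 0
    then show ?case using F_psd by simp
  next
    case (Suc d)
    define k where "k = T - Suc d"
    have k: "k < T" "Suc k = T - d" "T - k = Suc d" unfolding k_def using Suc.prems by auto
    have IH: "(\<lambda>j. riccati (S j) (Suc k)) \<longlonglongrightarrow> riccati S0 (Suc k)" "psd_mat (riccati S0 (Suc k))"
      using Suc by (simp_all add: PiM_def k(2))
    have "(\<lambda>j. riccati (S j) k) \<longlonglongrightarrow> riccati S0 k"
      unfolding riccati_step[OF k(1)]
      by (intro tendsto_diff tendsto_scaleR tendsto_const tendsto_matrix_mult IH(1)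
          tendsto_policy_cov_if_tendsto_riccati[OF pd lim k(1) IH])
    moreover have "psd_mat (riccati S0 k)"
      using pd k by (intro psd_mat_limit[OF calculation] riccati_psd) auto
    ultimately show ?case by (simp only: PiM_def k(3))
  qed
  from this[of "T - k"] show ?thesis by (simp add: PiM_def)
qed

lemma tendsto_policy_cov:
  fixes S :: "nat \<Rightarrow> nat \<Rightarrow> real^'m^'m"
  assumes pd: "\<forall>j. \<forall>k<T. pd_mat (S j k)" and lim: "\<forall>k<T. (\<lambda>j. S j k) \<longlonglongrightarrow> S0 k" and k: "k < T"
  shows "(\<lambda>j. policy_cov (S j) k) \<longlonglongrightarrow> policy_cov S0 k"
  using tendsto_riccati[OF pd lim] by (intro tendsto_policy_cov_if_tendsto_riccati[OF pd lim k]) auto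

lemma tendsto_policy_gain:
  fixes S :: "nat \<Rightarrow> nat \<Rightarrow> real^'m^'m"
  assumes pd: "\<forall>j. \<forall>k<T. pd_mat (S j k)" and lim: "\<forall>k<T. (\<lambda>j. S j k) \<longlonglongrightarrow> S0 k" and k: "k < T"
  shows "(\<lambda>j. policy_gain (S j) k) \<longlonglongrightarrow> policy_gain S0 k"
  unfolding PgainM_def
  by (intro tendsto_minus tendsto_scaleR tendsto_const tendsto_matrix_mult
      tendsto_policy_cov[OF pd lim k] tendsto_riccati[OF pd lim, THEN conjunct1])

end


section \<open>The cost of linear Gaussian policies\<close>

text \<open>Covariances of \<open>x\<^sub>k\<close> and of \<open>u\<^sub>k\<close> under the policy \<open>u\<^sub>k \<sim> N(P\<^sub>k x\<^sub>k, \<Sigma>\<^sub>k)\<close>.\<close>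

primrec state_cov :: "(nat \<Rightarrow> real^'n^'n) \<Rightarrow> (nat \<Rightarrow> real^'m^'n) \<Rightarrow> (nat \<Rightarrow> real^'n^'n) \<Rightarrow> real^'n^'n
    \<Rightarrow> (nat \<Rightarrow> real^'n^'m) \<Rightarrow> (nat \<Rightarrow> real^'m^'m) \<Rightarrow> nat \<Rightarrow> real^'n^'n" where
  "state_cov A B Sw X0 P Sg 0 = X0"
| "state_cov A B Sw X0 P Sg (Suc k) =
     (A k + B k ** P k) ** state_cov A B Sw X0 P Sg k ** transpose (A k + B k ** P k)
     + B k ** Sg k ** transpose (B k) + Sw k"

definition action_cov :: "(nat \<Rightarrow> real^'n^'n) \<Rightarrow> (nat \<Rightarrow> real^'m^'n) \<Rightarrow> (nat \<Rightarrow> real^'n^'n) \<Rightarrow> real^'n^'n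
    \<Rightarrow> (nat \<Rightarrow> real^'n^'m) \<Rightarrow> (nat \<Rightarrow> real^'m^'m) \<Rightarrow> nat \<Rightarrow> real^'m^'m" where
  "action_cov A B Sw X0 P Sg k = Sg k + P k ** state_cov A B Sw X0 P Sg k ** transpose (P k)"

text \<open>\<open>E[u\<^sup>T R u]/2 + \<epsilon> E[KL(N(P x, \<Sigma>) \<parallel> N(0, S))]\<close> when \<open>u\<close> has covariance \<open>M\<close>:
  the mean term \<open>E[x\<^sup>T P\<^sup>T S\<^sup>-\<^sup>1 P x]\<close> of the divergence is absorbed into \<open>tr(S\<^sup>-\<^sup>1 M)\<close>.\<close>

definition stage_cost :: "real \<Rightarrow> real^'m^'m \<Rightarrow> real^'m^'m \<Rightarrow> real^'m^'m \<Rightarrow> real^'m^'m \<Rightarrow> real" where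
  "stage_cost eps Rk Sk Sgk Mk = (1/2) * trace (Rk ** Mk)
     + (eps / 2) * (trace (matrix_inv Sk ** Mk) - real CARD('m) - ln (det Sgk) + ln (det Sk))"

lemma psd_mat_state_cov:
  assumes "psd_mat X0" "\<forall>k<K. psd_mat (Sg k)" "\<forall>k<K. psd_mat (Sw k)"
  shows "k \<le> K \<Longrightarrow> psd_mat (state_cov A B Sw X0 P Sg k)"
  by (induction k) (use assms in \<open>auto intro!: psd_mat_add psd_mat_congruence'\<close>)

lemma pd_mat_action_cov:
  assumes "psd_mat X0" "\<forall>k<K. pd_mat (Sg k)" "\<forall>k<K. psd_mat (Sw k)" "k < K"
  shows "pd_mat (action_cov A B Sw X0 P Sg k)"
proof -
  have "psd_mat (state_cov A B Sw X0 P Sg k)"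
    using assms pd_imp_psd_mat by (intro psd_mat_state_cov) auto
  then show ?thesis
    unfolding action_cov_def using assms by (intro pd_mat_add_psd psd_mat_congruence') auto
qed

lemma tendsto_state_cov:
  assumes "\<And>k. k < K \<Longrightarrow> (\<lambda>j. P j k) \<longlonglongrightarrow> P0 k" "\<And>k. k < K \<Longrightarrow> (\<lambda>j. Sg j k) \<longlonglongrightarrow> Sg0 k"
  shows "k \<le> K \<Longrightarrow> (\<lambda>j. state_cov A B Sw X0 (P j) (Sg j) k) \<longlonglongrightarrow> state_cov A B Sw X0 P0 Sg0 k"
  by (induction k)
    (auto intro!: tendsto_add tendsto_matrix_mult tendsto_transpose tendsto_const assms)

lemma tendsto_action_cov:
  assumes "\<And>k. k < K \<Longrightarrow> (\<lambda>j. P j k) \<longlonglongrightarrow> P0 k" "\<And>k. k < K \<Longrightarrow> (\<lambda>j. Sg j k) \<longlonglongrightarrow> Sg0 k"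
    and "k < K"
  shows "(\<lambda>j. action_cov A B Sw X0 (P j) (Sg j) k) \<longlonglongrightarrow> action_cov A B Sw X0 P0 Sg0 k"
  unfolding action_cov_def using assms
  by (intro tendsto_add tendsto_matrix_mult tendsto_transpose tendsto_state_cov[OF assms(1,2)]) auto

context entropic_lq
begin

lemma stage_cost_identity:
  fixes P :: "real^'n^'m" and Sg :: "real^'m^'m" and X W :: "real^'n^'n"
  assumes k: "k < T" and S: "pd_mat (S k)" and Pi: "psd_mat (riccati S (Suc k))" and Sg: "pd_mat Sg"
  shows "stage_cost eps (R k) (S k) Sg (Sg + P ** X ** transpose P)
      + (1/2) * trace (riccati S (Suc k) ** ((A k + B k ** P) ** X ** transpose (A k + B k ** P)
          + B k ** Sg ** transpose (B k) + W))
      - (1/2) * trace (riccati S k ** X)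
    = (eps/2) * (gauss_div Sg (policy_cov S k) + trace (matrix_inv (policy_cov S k)
          ** (P - policy_gain S k) ** X ** transpose (P - policy_gain S k)))
      + (1/2) * trace (riccati S (Suc k) ** W) + (eps/2) * (ln (det (S k)) - ln (det (policy_cov S k)))"
proof -
  have "pd_mat (policy_cov S k)" by (rule policy_cov_step(1)[OF k S Pi])
  then have ln_det: "ln (det (matrix_inv (policy_cov S k) ** Sg)) = ln (det Sg) - ln (det (policy_cov S k))"
    by (rule ln_det_matrix_inv_mult[OF Sg])
  show ?thesis
    using trace_stage_identity[where Sg = Sg and X = X and W = W and P = P,
        OF policy_cov_step(2)[OF k S Pi] riccati_completed_square[OF k S Pi]]
    unfolding stage_cost_def gauss_div_def ln_det by (simp add: algebra_simps)
qed

end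

lemma tendsto_0_if_descent:
  fixes f d :: "nat \<Rightarrow> real"
  assumes descent: "\<And>i. f (Suc i) + d i \<le> f i" and d: "\<And>i. 0 \<le> d i" and f: "\<And>i. 0 \<le> f i"
  shows "d \<longlonglongrightarrow> 0"
proof (rule tendsto_sandwich[where f = "\<lambda>i. 0" and h = "\<lambda>i. f i - f (Suc i)"])
  have "decseq f"
  proof (rule decseq_SucI)
    show "f (Suc i) \<le> f i" for i using descent[of i] d[of i] by linarith
  qed
  then obtain L where "f \<longlonglongrightarrow> L" using decseq_convergent f by metis
  then show "(\<lambda>i. f i - f (Suc i)) \<longlonglongrightarrow> 0"
    using tendsto_diff[OF _ LIMSEQ_Suc] by fastforce
qed (use descent d in \<open>auto intro: always_eventually simp: algebra_simps\<close>)

locale entropic_lqg = entropic_lq eps T A B R F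
  for eps T and A :: "nat \<Rightarrow> real^'n^'n" and B :: "nat \<Rightarrow> real^'m^'n" and R F +
  fixes Sw :: "nat \<Rightarrow> real^'n^'n" and X0 :: "real^'n^'n"
  assumes Sw_psd: "\<forall>k<T. psd_mat (Sw k)" and X0_psd: "psd_mat X0"
begin

abbreviation update :: "(nat \<Rightarrow> real^'m^'m) \<Rightarrow> nat \<Rightarrow> real^'m^'m" where
  "update \<equiv> Aop eps T A B R Sw F X0"

text \<open>\<open>cost S P \<Sigma>\<close> is \<open>J(\<pi>, \<rho>)\<close> for the prior \<open>\<rho>\<^sub>k = N(0, S\<^sub>k)\<close> and the policy
  \<open>\<pi>\<^sub>k(\<cdot>|x) = N(P\<^sub>k x, \<Sigma>\<^sub>k)\<close>.\<close>

definition cost :: "(nat \<Rightarrow> real^'m^'m) \<Rightarrow> (nat \<Rightarrow> real^'n^'m) \<Rightarrow> (nat \<Rightarrow> real^'m^'m) \<Rightarrow> real" where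
  "cost S P Sg = (\<Sum>k<T. stage_cost eps (R k) (S k) (Sg k) (action_cov A B Sw X0 P Sg k))
     + (1/2) * trace (F ** state_cov A B Sw X0 P Sg T)"

lemma update_eq_action_cov:
  "k < T \<Longrightarrow> update S k = action_cov A B Sw X0 (policy_gain S) (policy_cov S) k"
proof -
  have "SxM eps T A B R Sw F X0 S k = state_cov A B Sw X0 (policy_gain S) (policy_cov S) k" for k
    by (induction k) (simp_all add: Let_def)
  then show "k < T \<Longrightarrow> ?thesis" by (simp add: Aop_def action_cov_def)
qed

lemma update_pd:
  assumes "\<forall>k<T. pd_mat (S k)"
  shows "\<forall>k<T. pd_mat (update S k)"
  using assms pd_mat_policy_cov
  by (simp add: update_eq_action_cov pd_mat_action_cov[OF X0_psd _ Sw_psd])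

lemma cost_decomposition:
  assumes S: "\<forall>k<T. pd_mat (S k)" and Sg: "\<forall>k<T. pd_mat (Sg k)"
  shows "cost S P Sg = (1/2) * trace (riccati S 0 ** X0)
    + (\<Sum>k<T. (eps/2) * (gauss_div (Sg k) (policy_cov S k)
         + trace (matrix_inv (policy_cov S k) ** (P k - policy_gain S k)
              ** state_cov A B Sw X0 P Sg k ** transpose (P k - policy_gain S k)))
       + (1/2) * trace (riccati S (Suc k) ** Sw k)
       + (eps/2) * (ln (det (S k)) - ln (det (policy_cov S k))))"
    (is "_ = _ + (\<Sum>k<T. ?r k)")
proof -
  define g where "g k = (1/2) * trace (riccati S k ** state_cov A B Sw X0 P Sg k)" for k
  have "stage_cost eps (R k) (S k) (Sg k) (action_cov A B Sw X0 P Sg k) = ?r k + (g k - g (Suc k))"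
    if k: "k < T" for k
    using stage_cost_identity[OF k _ riccati_psd, of S "Sg k" "P k" "state_cov A B Sw X0 P Sg k" "Sw k"]
      S Sg k
    by (simp add: g_def action_cov_def algebra_simps)
  then have "cost S P Sg = (\<Sum>k<T. ?r k + (g k - g (Suc k))) + g T"
    unfolding cost_def g_def by (simp add: riccati_T)
  then have "cost S P Sg = (\<Sum>k<T. ?r k) + (g 0 - g T) + g T"
    by (simp add: sum.distrib sum_lessThan_telescope')
  then show ?thesis by (simp add: g_def)
qed

lemma cost_optimal_policy_le:
  assumes S: "\<forall>k<T. pd_mat (S k)" and Sg: "\<forall>k<T. pd_mat (Sg k)"
  shows "cost S (policy_gain S) (policy_cov S) \<le> cost S P Sg"
proof -
  have Sst: "\<forall>k<T. pd_mat (policy_cov S k)" using pd_mat_policy_cov[OF S] by blast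
  have "0 \<le> gauss_div (Sg k) (policy_cov S k)
      + trace (matrix_inv (policy_cov S k) ** (P k - policy_gain S k)
          ** state_cov A B Sw X0 P Sg k ** transpose (P k - policy_gain S k))" if k: "k < T" for k
    using Sg Sst k X0_psd Sw_psd pd_imp_psd_mat
    by (intro add_nonneg_nonneg gauss_div_nonneg trace_inv_congruence_nonneg psd_mat_state_cov) auto
  then show ?thesis
    unfolding cost_decomposition[OF S Sg] cost_decomposition[OF S Sst]
    using Sst eps_pos by (auto intro!: sum_mono simp: gauss_div_self trace_def)
qed

lemma cost_nonneg:
  assumes S: "\<forall>k<T. pd_mat (S k)" and Sg: "\<forall>k<T. pd_mat (Sg k)"
  shows "0 \<le> cost S P Sg"
proof -
  have Sg_psd: "\<forall>k<T. psd_mat (Sg k)" using Sg pd_imp_psd_mat by blast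
  have stage: "0 \<le> stage_cost eps (R k) (S k) (Sg k) (action_cov A B Sw X0 P Sg k)" if k: "k < T" for k
  proof -
    let ?X = "state_cov A B Sw X0 P Sg k"
    have X: "psd_mat ?X" using k by (intro psd_mat_state_cov[OF X0_psd Sg_psd Sw_psd]) simp
    have "0 \<le> trace (R k ** action_cov A B Sw X0 P Sg k)"
      using R_pd k pd_mat_action_cov[OF X0_psd Sg Sw_psd k]
      by (simp add: trace_psd_mult_nonneg pd_imp_psd_mat)
    moreover have "0 \<le> gauss_div (Sg k) (S k)" using S Sg k by (intro gauss_div_nonneg) auto
    moreover have "0 \<le> trace (matrix_inv (S k) ** P k ** ?X ** transpose (P k))"
      using S k X by (intro trace_inv_congruence_nonneg) auto
    moreover have "trace (matrix_inv (S k) ** action_cov A B Sw X0 P Sg k) - real CARD('m)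
        - ln (det (Sg k)) + ln (det (S k))
      = gauss_div (Sg k) (S k) + trace (matrix_inv (S k) ** P k ** ?X ** transpose (P k))"
      using ln_det_matrix_inv_mult[of "Sg k" "S k"] S Sg k
      by (simp add: gauss_div_def action_cov_def matrix_ring_simps trace_add matrix_mul_assoc)
    ultimately show ?thesis unfolding stage_cost_def using eps_pos by simp
  qed
  moreover have "0 \<le> trace (F ** state_cov A B Sw X0 P Sg T)"
    by (rule trace_psd_mult_nonneg[OF F_psd psd_mat_state_cov[OF X0_psd Sg_psd Sw_psd]]) simp
  moreover have "0 \<le> (\<Sum>k<T. stage_cost eps (R k) (S k) (Sg k) (action_cov A B Sw X0 P Sg k))"
    by (rule sum_nonneg) (simp add: stage)
  ultimately show ?thesis unfolding cost_def by simp
qed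

lemma cost_with_marginal_prior:
  assumes S: "\<forall>k<T. pd_mat (S k)" and S': "\<forall>k<T. pd_mat (S' k)"
    and marginal: "\<forall>k<T. action_cov A B Sw X0 P Sg k = S' k"
  shows "cost S' P Sg = cost S P Sg - (eps/2) * (\<Sum>k<T. gauss_div (S' k) (S k))"
proof -
  have "stage_cost eps (R k) (S' k) (Sg k) (action_cov A B Sw X0 P Sg k)
      = stage_cost eps (R k) (S k) (Sg k) (action_cov A B Sw X0 P Sg k) - (eps/2) * gauss_div (S' k) (S k)"
    if k: "k < T" for k
  proof -
    have I: "trace (matrix_inv (S' k) ** S' k) = real CARD('m)"
      using S' k by (simp add: matrix_inv_left pd_mat_invertible trace_I)
    have ln_det: "ln (det (matrix_inv (S k) ** S' k)) = ln (det (S' k)) - ln (det (S k))"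
      using S S' k by (intro ln_det_matrix_inv_mult) auto
    show ?thesis
      unfolding marginal[rule_format, OF k] stage_cost_def gauss_div_def ln_det
      using I by (simp add: algebra_simps)
  qed
  then show ?thesis unfolding cost_def by (simp add: sum_subtractf sum_distrib_left)
qed

lemma optimal_cost_descent:
  assumes S: "\<forall>k<T. pd_mat (S k)"
  shows "cost (update S) (policy_gain (update S)) (policy_cov (update S))
      + (eps/2) * (\<Sum>k<T. gauss_div (update S k) (S k))
    \<le> cost S (policy_gain S) (policy_cov S)"
proof -
  have US: "\<forall>k<T. pd_mat (update S k)" by (rule update_pd[OF S])
  have "cost (update S) (policy_gain (update S)) (policy_cov (update S))
      \<le> cost (update S) (policy_gain S) (policy_cov S)"
    using pd_mat_policy_cov[OF S] by (intro cost_optimal_policy_le[OF US]) auto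
  also have "\<dots> = cost S (policy_gain S) (policy_cov S) - (eps/2) * (\<Sum>k<T. gauss_div (update S k) (S k))"
    by (rule cost_with_marginal_prior[OF S US]) (simp add: update_eq_action_cov)
  finally show ?thesis by simp
qed

lemma optimal_cost_nonneg: "\<forall>k<T. pd_mat (S k) \<Longrightarrow> 0 \<le> cost S (policy_gain S) (policy_cov S)"
  by (intro cost_nonneg) (auto intro: pd_mat_policy_cov)

lemma tendsto_update:
  fixes S :: "nat \<Rightarrow> nat \<Rightarrow> real^'m^'m"
  assumes pd: "\<forall>j. \<forall>k<T. pd_mat (S j k)" and lim: "\<forall>k<T. (\<lambda>j. S j k) \<longlonglongrightarrow> S0 k" and k: "k < T"
  shows "(\<lambda>j. update (S j) k) \<longlonglongrightarrow> update S0 k"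
  unfolding update_eq_action_cov[OF k]
  using tendsto_policy_gain[OF pd lim] tendsto_policy_cov[OF pd lim] k
  by (intro tendsto_action_cov[where K = T]) auto

lemma iterates_pd:
  assumes seq0: "\<forall>k<T. pd_mat (seq 0 k)" and seq_Suc: "\<And>i. seq (Suc i) = update (seq i)"
  shows "\<forall>k<T. pd_mat (seq i k)"
proof (induction i)
  case (Suc i)
  then show ?case unfolding seq_Suc by (rule update_pd)
qed (rule seq0)

lemma gauss_div_iterates_tendsto_0:
  assumes seq0: "\<forall>k<T. pd_mat (seq 0 k)" and seq_Suc: "\<And>i. seq (Suc i) = update (seq i)"
    and k: "k < T"
  shows "(\<lambda>i. gauss_div (seq (Suc i) k) (seq i k)) \<longlonglongrightarrow> 0"
proof -
  note pd = iterates_pd[OF seq0 seq_Suc]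
  define J where "J i = cost (seq i) (policy_gain (seq i)) (policy_cov (seq i))" for i
  have "J (Suc i) + (eps/2) * gauss_div (seq (Suc i) k) (seq i k) \<le> J i" for i
  proof -
    have "(eps/2) * gauss_div (update (seq i) k) (seq i k)
        \<le> (eps/2) * (\<Sum>k<T. gauss_div (update (seq i) k) (seq i k))"
      using pd[of i] update_pd[OF pd[of i]] k eps_pos
      by (intro mult_left_mono member_le_sum gauss_div_nonneg) auto
    then show ?thesis using optimal_cost_descent[OF pd[of i]] unfolding J_def seq_Suc by linarith
  qed
  moreover have "0 \<le> (eps/2) * gauss_div (seq (Suc i) k) (seq i k)" for i
    using pd k eps_pos by (simp add: gauss_div_nonneg)
  moreover have "0 \<le> J i" for i unfolding J_def by (rule optimal_cost_nonneg[OF pd])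
  ultimately have "(\<lambda>i. (eps/2) * gauss_div (seq (Suc i) k) (seq i k)) \<longlonglongrightarrow> 0"
    by (rule tendsto_0_if_descent)
  then have "(\<lambda>i. (eps/2) * gauss_div (seq (Suc i) k) (seq i k)) \<longlonglongrightarrow> (eps/2) * 0"
    by simp
  then show ?thesis using eps_pos by (subst (asm) tendsto_mult_left_iff) auto
qed

theorem cluster_point_fixed:
  fixes seq :: "nat \<Rightarrow> nat \<Rightarrow> real^'m^'m"
  assumes seq0: "\<forall>k<T. pd_mat (seq 0 k)" and seq_Suc: "\<And>i. seq (Suc i) = update (seq i)"
    and cluster: "cluster_point T seq rho"
  shows "(\<forall>k<T. psd_mat (rho k)) \<and> (\<forall>k<T. rho k = update rho k)"
proof -
  note pd = iterates_pd[OF seq0 seq_Suc]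
  obtain r where r: "strict_mono r" and lim: "\<forall>k<T. (\<lambda>j. seq (r j) k) \<longlonglongrightarrow> rho k"
    using cluster by (auto simp: cluster_point_def)
  have "update rho k = rho k" if k: "k < T" for k
  proof -
    have X: "(\<lambda>j. seq (r j) k) \<longlonglongrightarrow> rho k" using lim k by blast
    have Y: "(\<lambda>j. update (seq (r j)) k) \<longlonglongrightarrow> update rho k"
      using pd lim k by (intro tendsto_update) auto
    have "(\<lambda>j. gauss_div (update (seq (r j)) k) (seq (r j) k)) \<longlonglongrightarrow> 0"
      using LIMSEQ_subseq_LIMSEQ[OF gauss_div_iterates_tendsto_0[OF seq0 seq_Suc k] r]
      by (simp add: o_def seq_Suc)
    moreover have "pd_mat (seq (r j) k)" "pd_mat (update (seq (r j)) k)" for j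
      using pd[of "r j"] update_pd[OF pd[of "r j"]] k by blast+
    ultimately show ?thesis by (intro limit_eq_if_gauss_div_tendsto_0[OF X Y])
  qed
  moreover have "psd_mat (rho k)" if "k < T" for k
    by (rule psd_mat_limit[of "\<lambda>j. seq (r j) k"]) (use lim pd that pd_imp_psd_mat in auto)
  ultimately show ?thesis by simp
qed

end


theorem proposition5:
  fixes eps :: real and T :: nat
    and A :: "nat \<Rightarrow> real^'n^'n" and B :: "nat \<Rightarrow> real^'m^'n"
    and R :: "nat \<Rightarrow> real^'m^'m" and Sw :: "nat \<Rightarrow> real^'n^'n"
    and F Sxini :: "real^'n^'n"
    and Srho0 :: "nat \<Rightarrow> real^'m^'m"
    and seq :: "nat \<Rightarrow> nat \<Rightarrow> real^'m^'m"
  assumes "T \<ge> 1" and "eps > 0"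
    and "\<forall>k<T. pd_mat (R k)" and "\<forall>k<T. pd_mat (Sw k)"
    and "psd_mat F" and "psd_mat Sxini"
    and "\<forall>k<T. pd_mat (Srho0 k)"
    and "seq 0 = Srho0"
    and "\<forall>i. seq (Suc i) = Aop eps T A B R Sw F Sxini (seq i)"
  shows "{rho. cluster_point T seq rho}
           \<subseteq> {rho. (\<forall>k<T. psd_mat (rho k))
                   \<and> (\<forall>k<T. rho k = Aop eps T A B R Sw F Sxini rho k)}"
proof
  fix rho assume "rho \<in> {rho. cluster_point T seq rho}"
  then have cluster: "cluster_point T seq rho" by simp
  interpret entropic_lqg eps T A B R F Sw Sxini
    using assms by unfold_locales (auto intro: pd_imp_psd_mat)
  have "(\<forall>k<T. psd_mat (rho k)) \<and> (\<forall>k<T. rho k = update rho k)"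
    using assms by (intro cluster_point_fixed[OF _ _ cluster]) auto
  then show "rho \<in> {rho. (\<forall>k<T. psd_mat (rho k)) \<and> (\<forall>k<T. rho k = Aop eps T A B R Sw F Sxini rho k)}"
    by blast
qed

end
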